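(* Let $\mathcal D_1=\{\psi\in H^1(0,\infty):\ \psi(0)=0,\ \int_0^\infty|\psi|^2dx=1,\ \int_0^\infty x|\psi(x)|^2dx<\infty\}$. For every $m>0$, $$\min\Big\{\int_0^\infty|\psi'(x)|^2dx:\ \psi\in\mathcal D_1,\ \int_0^\infty x|\psi(x)|^2dx=m\Big\}=\frac{\eta^2}{m^2},$$ and the minimum is attained by $\psi(x)=c\,\mathrm{Ai}(\lambda x-x_0)$ for the appropriate $\lambda>0$ (namely $\lambda=\bar C C_1/m$) and normalization constant $c$. Equivalently, $\big(\int_0^\infty|\psi'|^2\big)\big(\int_0^\infty x|\psi|^2\big)^2\ge\eta^2$ for all $\psi\in\mathcal D_1$, with equality for these Airy profiles.
   Context: $\mathrm{Ai}$ is the Airy function of the first kind and $-x_0$ (with $x_0\approx2.338$) is its zero of smallest absolute value. Define $\bar C=\big[\int_0^\infty\mathrm{Ai}(x-x_0)^2dx\big]^{-1}$, $C_1=\int_0^\infty x\,\mathrm{Ai}(x-x_0)^2dx$, $C_2=\int_0^\infty\big(\tfrac{d}{dx}\mathrm{Ai}(x-x_0)\big)^2dx$, and $\eta^2:=\bar C^3C_1^2C_2$ (numerically $\eta^2\approx1.89$). In the battery interpretation $\int|\psi'|^2$ is the unitary defect and $\omega\int x|\psi|^2/\delta$ the mean battery energy of the state with amplitudes $\propto\psi(n\delta)$. *)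

theory Defs
  imports "HOL-Analysis.Analysis"
begin

text \<open>Ai(x) = Ai(0) * sum_k 3^k (1/3)_k x^(3k)/(3k)! + Ai'(0) * sum_k 3^k (2/3)_k x^(3k+1)/(3k+1)!,
  with Ai(0) = 1/(3^(2/3) Gamma(2/3)) and Ai'(0) = -1/(3^(1/3) Gamma(1/3)).\<close>

definition Ai :: "real \<Rightarrow> real" where
  "Ai x =
     (1 / (3 powr (2/3) * Gamma (2/3))) *
       (\<Sum>k. 3 ^ k * pochhammer (1/3) k * x ^ (3*k) / fact (3*k))
   - (1 / (3 powr (1/3) * Gamma (1/3))) *
       (\<Sum>k. 3 ^ k * pochhammer (2/3) k * x ^ (3*k+1) / fact (3*k+1))"

definition x0 :: real where
  "x0 = (THE a. a > 0 \<and> Ai (- a) = 0 \<and> (\<forall>z. Ai z = 0 \<longrightarrow> a \<le> \<bar>z\<bar>))"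

definition Cbar :: real where
  "Cbar = 1 / (LINT x:{0..}|lborel. (Ai (x - x0))\<^sup>2)"

definition C1 :: real where
  "C1 = (LINT x:{0..}|lborel. x * (Ai (x - x0))\<^sup>2)"

definition C2 :: real where
  "C2 = (LINT x:{0..}|lborel. (deriv (\<lambda>y. Ai (y - x0)) x)\<^sup>2)"

definition eta2 :: real where
  "eta2 = Cbar ^ 3 * C1 ^ 2 * C2"

text \<open>psi belongs to H^1(0,infinity) with psi(0) = 0, and g is its (weak) derivative:
  g is locally integrable, psi is its (continuous) primitive vanishing at 0, and both
  psi and g are square integrable on [0,infinity).\<close>

definition H1_0 :: "(real \<Rightarrow> complex) \<Rightarrow> (real \<Rightarrow> complex) \<Rightarrow> bool" where
  "H1_0 \<psi> g \<longleftrightarrow>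
     g \<in> borel_measurable lborel \<and>
     (\<forall>x\<ge>0. set_integrable lborel {0..x} g \<and> \<psi> x = (LINT t:{0..x}|lborel. g t)) \<and>
     set_integrable lborel {0..} (\<lambda>x. (cmod (\<psi> x))\<^sup>2) \<and>
     set_integrable lborel {0..} (\<lambda>x. (cmod (g x))\<^sup>2)"

definition D1 :: "(real \<Rightarrow> complex) \<Rightarrow> (real \<Rightarrow> complex) \<Rightarrow> bool" where
  "D1 \<psi> g \<longleftrightarrow>
     H1_0 \<psi> g \<and>
     (LINT x:{0..}|lborel. (cmod (\<psi> x))\<^sup>2) = 1 \<and>
     set_integrable lborel {0..} (\<lambda>x. x * (cmod (\<psi> x))\<^sup>2)"

definition defect :: "(real \<Rightarrow> complex) \<Rightarrow> real" where
  "defect g = (LINT x:{0..}|lborel. (cmod (g x))\<^sup>2)"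

definition moment :: "(real \<Rightarrow> complex) \<Rightarrow> real" where
  "moment \<psi> = (LINT x:{0..}|lborel. x * (cmod (\<psi> x))\<^sup>2)"

end

theory Submission
  imports Defs "HOL-Real_Asymp.Real_Asymp"
begin

(* For l > 0 and e > 0 the function \<phi>(x) = Ai(l x - x0 + e) is positive on [0, \<infinity>) and solves
   \<phi>'' = V \<phi> with V(x) = l^3 x - l^2 (x0 - e), so w = \<phi>'/\<phi> solves the Riccati equation
   w' = V - w^2. Completing the square gives (w |\<psi>|^2)' \<le> |\<psi>'|^2 + V |\<psi>|^2 (ground-state
   substitution), and since w(b) |\<psi>(b)|^2 is bounded below by an integrable function, integrating
   over [0, \<infinity>) yields \<integral>|\<psi>'|^2 \<ge> l^2 (x0 - e) - l^3 m. Letting e \<rightarrow> 0 and taking l = Cbar C1 / m,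
   the energy identity C2 + C1 = x0 / Cbar (from (Ai Ai')' = Ai'^2 + u Ai^2) turns the right-hand
   side into eta2 / m^2, which the rescaled Airy function attains.

   The needed facts about Ai (positivity and decay of Ai Ai' to the right of -x0, integrability of
   Ai^2, u Ai^2 and Ai'^2) come from the Maclaurin series, which gives Ai'' = x Ai, and from an
   integral representation showing that Ai is bounded on [0, \<infinity>). *)

section \<open>The Maclaurin series of Ai\<close>

(* c1 = Ai(0) and c2 = -Ai'(0), as in Abramowitz-Stegun 10.4.4. *)

definition airy_c1 :: real where "airy_c1 = 1 / (3 powr (2/3) * Gamma (2/3))"
definition airy_c2 :: real where "airy_c2 = 1 / (3 powr (1/3) * Gamma (1/3))"

lemma airy_c1_pos: "airy_c1 > 0" and airy_c2_pos: "airy_c2 > 0"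
  unfolding airy_c1_def airy_c2_def by simp_all

(* The recursion is Ai'' = x Ai, read off coefficientwise. *)

fun Ai_coeff :: "nat \<Rightarrow> real" where
  "Ai_coeff 0 = airy_c1"
| "Ai_coeff (Suc 0) = - airy_c2"
| "Ai_coeff (Suc (Suc 0)) = 0"
| "Ai_coeff (Suc (Suc (Suc n))) = Ai_coeff n / ((real n + 2) * (real n + 3))"

lemma Ai_coeff_add3: "Ai_coeff (n + 3) = Ai_coeff n / ((real n + 2) * (real n + 3))"
  by (simp add: numeral_3_eq_3)

lemma Ai_coeff_closed_form:
  "Ai_coeff (3 * k + r) = Ai_coeff r * 3 ^ k * pochhammer ((real r + 1) / 3) k * fact r / fact (3 * k + r)"
proof (induction k)
  case (Suc k)
  define n where "n = 3 * k + r"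
  define P where "P = 3 ^ k * pochhammer ((real r + 1) / 3) k"
  have idx: "3 * Suc k + r = n + 3" by (simp add: n_def)
  have fact3: "fact (n + 3) = (fact n :: real) * ((real n + 1) * (real n + 2) * (real n + 3))"
    by (simp add: numeral_3_eq_3 algebra_simps)
  have poch: "Ai_coeff r * 3 ^ Suc k * pochhammer ((real r + 1) / 3) (Suc k) = Ai_coeff r * (P * (real n + 1))"
    by (simp add: P_def pochhammer_rec' n_def algebra_simps)
  have "Ai_coeff (n + 3) = Ai_coeff r * P * fact r / fact n / ((real n + 2) * (real n + 3))"
    using Suc by (simp add: Ai_coeff_add3 n_def P_def)
  also have "\<dots> = Ai_coeff r * (P * (real n + 1)) * fact r / fact (n + 3)"
    unfolding fact3 by (simp add: divide_simps add_pos_nonneg)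
  finally show ?case
    unfolding idx poch .
qed simp

lemma Ai_coeff_mod3_eq_2:
  assumes "n mod 3 = 2"
  shows "Ai_coeff n = 0"
proof -
  have "Ai_coeff 2 = 0" by (simp add: numeral_2_eq_2)
  then have "Ai_coeff (3 * (n div 3) + 2) = 0"
    unfolding Ai_coeff_closed_form[of _ 2] by simp
  moreover have "3 * (n div 3) + 2 = n" using assms by presburger
  ultimately show ?thesis by simp
qed

lemma summable_cubic_ratio:
  fixes a :: "nat \<Rightarrow> real" and r :: nat
  assumes rec: "\<And>k. a (Suc k) = a k * c / ((3 * real k + r + 2) * (3 * real k + r + 3))"
  shows "summable a"
proof (rule summable_ratio_test[of "1/2" "nat \<lceil>\<bar>c\<bar>\<rceil>"])
  fix n assume n: "nat \<lceil>\<bar>c\<bar>\<rceil> \<le> n"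
  define d where "d = (3 * real n + r + 2) * (3 * real n + r + 3)"
  have "2 * real n + 2 \<le> (3 * real n + r + 2) * 1" by simp
  also have "\<dots> \<le> d"
    unfolding d_def by (intro mult_left_mono) (auto intro!: add_nonneg_nonneg)
  finally have cd: "2 * \<bar>c\<bar> < d" using n by linarith
  have d: "d > 0" using cd abs_ge_zero[of c] by linarith
  have "\<bar>c\<bar> / d \<le> 1/2" using cd d by (simp add: divide_le_eq)
  then have "norm (a n) * (\<bar>c\<bar> / d) \<le> norm (a n) * (1/2)"
    by (rule mult_left_mono) simp
  moreover have "norm (a (Suc n)) = norm (a n) * (\<bar>c\<bar> / d)"
    using d by (simp add: rec d_def abs_mult)
  ultimately show "norm (a (Suc n)) \<le> 1/2 * norm (a n)" by simp
qed simp

lemma sums_mod_reindex: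
  fixes f :: "nat \<Rightarrow> 'a::real_normed_vector"
  assumes "r < m"
  shows "(\<lambda>k. f (m * k + r)) sums s \<longleftrightarrow> (\<lambda>n. if n mod m = r then f n else 0) sums s"
proof -
  have "strict_mono (\<lambda>k. m * k + r)"
    using assms by (intro strict_monoI) simp
  moreover have "(if n mod m = r then f n else 0) = 0" if "n \<notin> range (\<lambda>k. m * k + r)" for n
    using that rangeI[of "\<lambda>k. m * k + r" "n div m"] by auto
  ultimately have "(\<lambda>k. if (m * k + r) mod m = r then f (m * k + r) else 0) sums s
      \<longleftrightarrow> (\<lambda>n. if n mod m = r then f n else 0) sums s"
    by (rule sums_mono_reindex)
  with assms show ?thesis by simp
qed

lemma summable_Ai_coeff_residue: "summable (\<lambda>k. Ai_coeff (3 * k + r) * x ^ (3 * k + r))"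
proof (rule summable_cubic_ratio)
  fix k
  have "Ai_coeff (3 * Suc k + r) = Ai_coeff (3 * k + r) / ((3 * real k + r + 2) * (3 * real k + r + 3))"
    using Ai_coeff_add3[of "3 * k + r"] by (simp add: add.commute add.left_commute)
  moreover have "x ^ (3 * Suc k + r) = x ^ (3 * k + r) * x ^ 3"
    by (simp add: power_add[symmetric] add.commute add.left_commute)
  ultimately show "Ai_coeff (3 * Suc k + r) * x ^ (3 * Suc k + r)
      = Ai_coeff (3 * k + r) * x ^ (3 * k + r) * x ^ 3 / ((3 * real k + r + 2) * (3 * real k + r + 3))"
    by simp
qed

lemma Ai_coeff_powser_sums:
  "(\<lambda>n. Ai_coeff n * x ^ n) sums
     ((\<Sum>k. Ai_coeff (3 * k) * x ^ (3 * k)) + (\<Sum>k. Ai_coeff (3 * k + 1) * x ^ (3 * k + 1)))"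
proof -
  have residue: "(\<lambda>n. if n mod 3 = r then Ai_coeff n * x ^ n else 0) sums (\<Sum>k. Ai_coeff (3 * k + r) * x ^ (3 * k + r))"
    if "r < 3" for r
    using summable_Ai_coeff_residue[of r x] that by (subst sums_mod_reindex[symmetric]) auto
  have "Ai_coeff n * x ^ n = (if n mod 3 = 0 then Ai_coeff n * x ^ n else 0)
      + (if n mod 3 = 1 then Ai_coeff n * x ^ n else 0)" for n
    using Ai_coeff_mod3_eq_2[of n] by (cases "n mod 3 = 2") auto
  then show ?thesis
    using sums_add[OF residue[of 0] residue[of 1]] by simp
qed

lemma summable_Ai_coeff_powser: "summable (\<lambda>n. Ai_coeff n * x ^ n)"
  using Ai_coeff_powser_sums by (rule sums_summable)

lemma Ai_powser: "Ai x = (\<Sum>n. Ai_coeff n * x ^ n)"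
proof -
  have even: "(\<lambda>k. 3 ^ k * pochhammer (1/3) k * x ^ (3 * k) / fact (3 * k))
      = (\<lambda>k. Ai_coeff (3 * k) * x ^ (3 * k) / airy_c1)"
    using airy_c1_pos by (simp add: Ai_coeff_closed_form[of _ 0, simplified] fun_eq_iff)
  have odd: "(\<lambda>k. 3 ^ k * pochhammer (2/3) k * x ^ (3 * k + 1) / fact (3 * k + 1))
      = (\<lambda>k. Ai_coeff (3 * k + 1) * x ^ (3 * k + 1) / - airy_c2)"
    using airy_c2_pos by (simp add: Ai_coeff_closed_form[of _ 1, simplified] fun_eq_iff)
  have "Ai x = airy_c1 * (\<Sum>k. 3 ^ k * pochhammer (1/3) k * x ^ (3 * k) / fact (3 * k))
      - airy_c2 * (\<Sum>k. 3 ^ k * pochhammer (2/3) k * x ^ (3 * k + 1) / fact (3 * k + 1))"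
    by (simp add: Ai_def airy_c1_def airy_c2_def)
  also have "\<dots> = (\<Sum>k. Ai_coeff (3 * k) * x ^ (3 * k)) + (\<Sum>k. Ai_coeff (3 * k + 1) * x ^ (3 * k + 1))"
    unfolding even odd
    using suminf_divide[OF summable_Ai_coeff_residue[of 0 x, simplified], of airy_c1]
      suminf_divide[OF summable_Ai_coeff_residue[of 1 x], of "- airy_c2"]
      airy_c1_pos airy_c2_pos
    by simp
  also have "\<dots> = (\<Sum>n. Ai_coeff n * x ^ n)"
    using Ai_coeff_powser_sums by (simp add: sums_iff)
  finally show ?thesis .
qed

definition Ai' :: "real \<Rightarrow> real" where
  "Ai' x = (\<Sum>n. diffs Ai_coeff n * x ^ n)"

lemma DERIV_Ai: "(Ai has_real_derivative Ai' x) (at x)"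
proof -
  have "((\<lambda>x. \<Sum>n. Ai_coeff n * x ^ n) has_real_derivative Ai' x) (at x)"
    unfolding Ai'_def by (rule termdiffs_strong_converges_everywhere) (rule summable_Ai_coeff_powser)
  then show ?thesis by (simp flip: Ai_powser)
qed

lemma diffs_diffs_Ai_coeff: "diffs (diffs Ai_coeff) 0 = 0" "diffs (diffs Ai_coeff) (Suc n) = Ai_coeff n"
proof -
  show "diffs (diffs Ai_coeff) 0 = 0" by (simp add: diffs_def numeral_2_eq_2)
  have "diffs (diffs Ai_coeff) (Suc n) = ((real n + 2) * (real n + 3)) * Ai_coeff (Suc (Suc (Suc n)))"
    by (simp add: diffs_def algebra_simps del: Ai_coeff.simps)
  moreover have "(real n + 2) * (real n + 3) \<noteq> 0" by (simp add: add_nonneg_eq_0_iff)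
  ultimately show "diffs (diffs Ai_coeff) (Suc n) = Ai_coeff n"
    by simp
qed

lemma DERIV_Ai': "(Ai' has_real_derivative x * Ai x) (at x)"
proof -
  have "(\<lambda>n. x * (Ai_coeff n * x ^ n)) sums (x * Ai x)"
    unfolding Ai_powser by (intro sums_mult summable_sums summable_Ai_coeff_powser)
  then have "(\<lambda>n. diffs (diffs Ai_coeff) (Suc n) * x ^ Suc n) sums (x * Ai x)"
    by (simp add: diffs_diffs_Ai_coeff(2) algebra_simps del: diffs_def)
  then have "(\<lambda>n. diffs (diffs Ai_coeff) n * x ^ n) sums (x * Ai x)"
    using sums_Suc_iff[of "\<lambda>n. diffs (diffs Ai_coeff) n * x ^ n" "x * Ai x"]
    by (simp add: diffs_diffs_Ai_coeff(1) del: diffs_def)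
  moreover have "((\<lambda>x. \<Sum>n. diffs Ai_coeff n * x ^ n) has_real_derivative
      (\<Sum>n. diffs (diffs Ai_coeff) n * x ^ n)) (at x)"
    by (intro termdiffs_strong_converges_everywhere termdiff_converges_all summable_Ai_coeff_powser)
  ultimately show ?thesis by (simp add: Ai'_def[abs_def] sums_iff)
qed

lemma Ai_at_0: "Ai 0 = airy_c1"
  by (simp add: Ai_powser powser_zero)

lemmas DERIV_Ai_chain [derivative_intros] = DERIV_Ai[THEN DERIV_chain2]
lemmas DERIV_Ai'_chain [derivative_intros] = DERIV_Ai'[THEN DERIV_chain2]

lemma isCont_Ai: "isCont Ai x" and isCont_Ai': "isCont Ai' x"
  using DERIV_Ai DERIV_Ai' by (blast intro: DERIV_isCont)+

lemma continuous_on_Ai [continuous_intros]: "continuous_on S f \<Longrightarrow> continuous_on S (\<lambda>x. Ai (f x))"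
  and continuous_on_Ai' [continuous_intros]: "continuous_on S f \<Longrightarrow> continuous_on S (\<lambda>x. Ai' (f x))"
  by (auto intro: continuous_on_compose2[of UNIV] continuous_at_imp_continuous_on isCont_Ai isCont_Ai')

lemma borel_measurable_Ai [measurable]: "Ai \<in> borel_measurable borel"
  and borel_measurable_Ai' [measurable]: "Ai' \<in> borel_measurable borel"
  by (auto intro: borel_measurable_continuous_onI continuous_at_imp_continuous_on isCont_Ai isCont_Ai')

section \<open>An integral representation of Ai\<close>

lemma Gamma_set_integral:
  fixes s :: real
  assumes s: "s > 0"
  shows "set_integrable lborel {0<..} (\<lambda>t. t powr (s - 1) * exp (- t))"
    and "(LINT t:{0<..}|lborel. t powr (s - 1) * exp (- t)) = Gamma s"
proof -
  define h where "h t = indicator {0<..} t * (t powr (s - 1) * exp (- t))" for t :: real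
  have hm: "h \<in> borel_measurable lborel" unfolding h_def by measurable
  have "AE t in lborel. t \<noteq> 0" by (rule AE_lborel_singleton)
  then have "AE t in lborel. ennreal (indicator {0..} t * t powr (s - 1) / exp t) = ennreal (h t)"
    by eventually_elim (auto simp: h_def indicator_def exp_minus field_simps)
  then have nn: "(\<integral>\<^sup>+t. ennreal (h t) \<partial>lborel) = ennreal (Gamma s)"
    using Gamma_conv_nn_integral_real[OF s] nn_integral_cong_AE by fastforce
  have h0: "AE t in lborel. 0 \<le> h t" by (auto simp: h_def indicator_def)
  have "integrable lborel h" by (rule integrableI_nn_integral_finite[OF hm h0 nn])
  then show "set_integrable lborel {0<..} (\<lambda>t. t powr (s - 1) * exp (- t))"
    unfolding set_integrable_def h_def by simp
  have "integral\<^sup>L lborel h = Gamma s"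
    using integral_eq_nn_integral[OF hm h0] nn s by simp
  then show "(LINT t:{0<..}|lborel. t powr (s - 1) * exp (- t)) = Gamma s"
    unfolding set_lebesgue_integral_def h_def by simp
qed

lemma set_integral_cube_root_substitution:
  fixes f :: "real \<Rightarrow> real"
  assumes cont: "\<And>r. isCont f r" and nonneg: "\<And>r. r \<ge> 0 \<Longrightarrow> f r \<ge> 0"
    and int: "set_integrable lborel {0<..} (\<lambda>t. f ((3 * t) powr (1/3)) * (3 * t) powr (-2/3))"
  shows "set_integrable lborel {0<..} f"
    and "(LINT r:{0<..}|lborel. f r) = (LINT t:{0<..}|lborel. f ((3 * t) powr (1/3)) * (3 * t) powr (-2/3))"
proof -
  define g where "g t = (3 * t) powr (1/3)" for t :: real
  define g' where "g' t = (3 * t) powr (-2/3)" for t :: real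
  have deriv: "(g has_real_derivative g' t) (at t)" if "0 < t" for t
    using that unfolding g_def g'_def
    by (auto intro!: derivative_eq_intros simp: powr_minus field_simps powr_add[symmetric] powr_diff)
  have cont_g': "isCont g' x" if "0 < x" for x
    using that unfolding g'_def by (intro continuous_intros) auto
  have lim0: "((ereal \<circ> g \<circ> real_of_ereal) \<longlongrightarrow> 0) (at_right 0)"
    unfolding g_def zero_ereal_def ereal_tendsto_simps
    using eventually_at_right_less[of "0::real"]
    by (auto intro!: tendsto_eq_intros elim: eventually_mono)
  have lim_inf: "((ereal \<circ> g \<circ> real_of_ereal) \<longlongrightarrow> \<infinity>) (at_left \<infinity>)"
    unfolding g_def ereal_tendsto_simps by real_asymp
  have int': "set_integrable lborel (einterval 0 \<infinity>) (\<lambda>t. f (g t) * g' t)"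
    using int by (simp add: g_def g'_def zero_ereal_def)
  have prems: "(0::ereal) < \<infinity>"
    "\<And>x. 0 < ereal x \<Longrightarrow> ereal x < \<infinity> \<Longrightarrow> (g has_real_derivative g' x) (at x)"
    "\<And>x. 0 < ereal x \<Longrightarrow> ereal x < \<infinity> \<Longrightarrow> isCont f (g x)"
    "\<And>x. 0 < ereal x \<Longrightarrow> ereal x < \<infinity> \<Longrightarrow> isCont g' x"
    "\<And>x. 0 < ereal x \<Longrightarrow> ereal x < \<infinity> \<Longrightarrow> 0 \<le> f (g x)"
    "\<And>x. 0 \<le> ereal x \<Longrightarrow> ereal x \<le> \<infinity> \<Longrightarrow> 0 \<le> g' x"
    using deriv cont nonneg cont_g' by (auto simp: g_def g'_def zero_ereal_def)
  note S = interval_integral_substitution_nonneg[OF prems lim0 lim_inf int']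
  from S show "set_integrable lborel {0<..} f"
    and "(LINT r:{0<..}|lborel. f r) = (LINT t:{0<..}|lborel. f ((3 * t) powr (1/3)) * (3 * t) powr (-2/3))"
    by (simp_all add: zero_ereal_def interval_integral_to_infinity_eq g_def g'_def)
qed

lemma cube_root_substitution_monomial:
  fixes t :: real
  assumes t: "t > 0"
  shows "((3 * t) powr (1/3)) ^ n * exp (- (((3 * t) powr (1/3)) ^ 3 / 3)) * (3 * t) powr (-2/3)
    = 3 powr ((real n - 2) / 3) * (t powr ((real n + 1) / 3 - 1) * exp (- t))"
proof -
  have "((3 * t) powr (1/3)) ^ n = (3 * t) powr (real n / 3)"
    "((3 * t) powr (1/3)) ^ 3 = 3 * t"
    using t by (simp_all add: powr_realpow[symmetric] powr_powr)
  then have "((3 * t) powr (1/3)) ^ n * exp (- (((3 * t) powr (1/3)) ^ 3 / 3)) * (3 * t) powr (-2/3)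
      = (3 * t) powr ((real n - 2) / 3) * exp (- t)"
    by (simp add: powr_add[symmetric] field_simps)
  also have "\<dots> = 3 powr ((real n - 2) / 3) * (t powr ((real n + 1) / 3 - 1) * exp (- t))"
    using t by (simp add: powr_mult field_simps)
  finally show ?thesis .
qed

definition airy_moment :: "nat \<Rightarrow> real" where
  "airy_moment n = (LINT r:{0<..}|lborel. r ^ n * exp (- (r ^ 3 / 3)))"

lemma airy_moment_integrable: "set_integrable lborel {0<..} (\<lambda>r::real. r ^ n * exp (- (r ^ 3 / 3)))"
  and airy_moment_eq_Gamma: "airy_moment n = 3 powr ((real n - 2) / 3) * Gamma ((real n + 1) / 3)"
proof -
  define s where "s = (real n + 1) / 3"
  have s: "s > 0" unfolding s_def by simp
  have subst: "((3 * t) powr (1/3)) ^ n * exp (- (((3 * t) powr (1/3)) ^ 3 / 3)) * (3 * t) powr (-2/3)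
      = 3 powr ((real n - 2) / 3) * (t powr (s - 1) * exp (- t))" if "t \<in> {0<..}" for t :: real
    unfolding s_def using that by (intro cube_root_substitution_monomial) simp
  have "set_integrable lborel {0<..} (\<lambda>t. 3 powr ((real n - 2) / 3) * (t powr (s - 1) * exp (- t)))"
    using Gamma_set_integral(1)[OF s] by simp
  then have int: "set_integrable lborel {0<..}
      (\<lambda>t::real. ((3 * t) powr (1/3)) ^ n * exp (- (((3 * t) powr (1/3)) ^ 3 / 3)) * (3 * t) powr (-2/3))"
    by (simp only: set_integrable_cong[OF refl refl subst])
  have cont: "isCont (\<lambda>r. r ^ n * exp (- (r ^ 3 / 3))) r" for r :: real
    by (intro continuous_intros) simp
  have nonneg: "0 \<le> r ^ n * exp (- (r ^ 3 / 3))" if "0 \<le> r" for r :: real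
    using that by simp
  note S = set_integral_cube_root_substitution[OF cont nonneg int]
  show "set_integrable lborel {0<..} (\<lambda>r::real. r ^ n * exp (- (r ^ 3 / 3)))"
    by (rule S(1))
  have "airy_moment n = (LINT t:{0<..}|lborel.
      ((3 * t) powr (1/3)) ^ n * exp (- (((3 * t) powr (1/3)) ^ 3 / 3)) * (3 * t) powr (-2/3))"
    unfolding airy_moment_def by (rule S(2))
  also have "\<dots> = (LINT t:{0<..}|lborel. 3 powr ((real n - 2) / 3) * (t powr (s - 1) * exp (- t)))"
    by (rule set_lebesgue_integral_cong) (simp, blast intro: subst)
  also have "\<dots> = 3 powr ((real n - 2) / 3) * Gamma s"
    using Gamma_set_integral(2)[OF s] by simp
  finally show "airy_moment n = 3 powr ((real n - 2) / 3) * Gamma ((real n + 1) / 3)"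
    unfolding s_def .
qed

lemma airy_moment_add3: "airy_moment (n + 3) = (real n + 1) * airy_moment n"
proof -
  have "(real (n + 3) + 1) / 3 = (real n + 1) / 3 + 1" by simp
  then have G: "Gamma ((real (n + 3) + 1) / 3) = ((real n + 1) / 3) * Gamma ((real n + 1) / 3)"
    by (simp only:) (rule Gamma_plus1, auto simp: nonpos_Ints_def)
  have "(real (n + 3) - 2) / 3 = 1 + (real n - 2) / 3"
    by (simp add: field_simps)
  then have P: "3 powr ((real (n + 3) - 2) / 3) = 3 * 3 powr ((real n - 2) / 3)"
    by (simp only: powr_add) simp
  show ?thesis
    unfolding airy_moment_eq_Gamma G P by simp
qed

lemma Gamma_reflection_real: "Gamma x * Gamma (1 - x) = pi / sin (pi * x)"
proof -
  have "complex_of_real (Gamma x * Gamma (1 - x)) = complex_of_real (pi / sin (pi * x))"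
    using Gamma_reflection_complex[of "complex_of_real x"] Gamma_complex_of_real[of "1 - x"]
    by (simp add: Gamma_complex_of_real sin_of_real[symmetric])
  then show ?thesis by (simp only: of_real_eq_iff)
qed

lemma Gamma_third_mult_Gamma_two_thirds: "Gamma (1/3) * Gamma (2/3) = 2 * pi / sqrt 3"
  using Gamma_reflection_real[of "1/3"] by (simp add: sin_60)

lemma set_integral_sums_dominated:
  fixes f :: "nat \<Rightarrow> real \<Rightarrow> real"
  assumes int_f: "\<And>n. set_integrable lborel A (f n)"
    and meas_F: "set_borel_measurable lborel A F"
    and int_w: "set_integrable lborel A w"
    and sums: "\<And>r. r \<in> A \<Longrightarrow> (\<lambda>n. f n r) sums F r"
    and bound: "\<And>N r. r \<in> A \<Longrightarrow> \<bar>\<Sum>n<N. f n r\<bar> \<le> w r"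
  shows "set_integrable lborel A F"
    and "(\<lambda>n. LINT r:A|lborel. f n r) sums (LINT r:A|lborel. F r)"
proof -
  define s where "s N r = (\<Sum>n<N. indicator A r * f n r)" for N r
  have int_s: "integrable lborel (s N)" for N
    unfolding s_def using int_f by (intro Bochner_Integration.integrable_sum) (simp add: set_integrable_def)
  have int_s_eq: "integral\<^sup>L lborel (s N) = (\<Sum>n<N. LINT r:A|lborel. f n r)" for N
    unfolding s_def set_lebesgue_integral_def using int_f
    by (subst Bochner_Integration.integral_sum) (simp_all add: set_integrable_def)
  have meas_F': "(\<lambda>r. indicator A r * F r) \<in> borel_measurable lborel"
    using meas_F by (simp add: set_borel_measurable_def)
  have int_w': "integrable lborel (\<lambda>r. indicator A r * w r)"
    using int_w by (simp add: set_integrable_def)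
  have lim: "AE r in lborel. (\<lambda>N. s N r) \<longlonglongrightarrow> indicator A r * F r"
  proof (rule AE_I2)
    fix r
    show "(\<lambda>N. s N r) \<longlonglongrightarrow> indicator A r * F r"
      using sums[of r] by (cases "r \<in> A") (simp_all add: s_def sums_def)
  qed
  have dom: "AE r in lborel. norm (s N r) \<le> indicator A r * w r" for N
  proof (rule AE_I2)
    fix r
    show "norm (s N r) \<le> indicator A r * w r"
      using bound[of r N] by (cases "r \<in> A") (simp_all add: s_def)
  qed
  have "integrable lborel (\<lambda>r. indicator A r * F r)"
    by (rule integrable_dominated_convergence[OF meas_F' _ int_w' lim dom]) (use int_s in auto)
  then show "set_integrable lborel A F"
    by (simp add: set_integrable_def)
  have "(\<lambda>N. integral\<^sup>L lborel (s N)) \<longlonglongrightarrow> integral\<^sup>L lborel (\<lambda>r. indicator A r * F r)"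
    by (rule integral_dominated_convergence[OF meas_F' _ int_w' lim dom]) (use int_s in auto)
  then show "(\<lambda>n. LINT r:A|lborel. f n r) sums (LINT r:A|lborel. F r)"
    by (simp add: sums_def int_s_eq set_lebesgue_integral_def)
qed

lemma linear_minus_cubic_le:
  fixes b r :: real
  assumes r: "r \<ge> 0"
  shows "b * r - r ^ 3 / 3 \<le> b ^ 2 + 1"
proof -
  have "b * r \<le> b ^ 2 + r ^ 2 / 4"
    using zero_le_power2[of "b - r / 2"] by (simp add: power2_eq_square algebra_simps)
  moreover have "r ^ 2 / 4 - r ^ 3 / 3 \<le> 1"
  proof (cases "r \<le> 1")
    case True
    then have "r ^ 2 \<le> 1" using r by (simp add: power_le_one)
    moreover have "r ^ 3 \<ge> 0" using r by simp
    ultimately show ?thesis by linarith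
  next
    case False
    then have "r ^ 2 * 1 \<le> r ^ 2 * r" by (intro mult_left_mono) auto
    then have "r ^ 2 \<le> r ^ 3" by (simp add: power3_eq_cube power2_eq_square)
    moreover have "r ^ 2 \<ge> 0" by simp
    ultimately show ?thesis by linarith
  qed
  ultimately show ?thesis by linarith
qed

lemma set_integrable_exp_cubic_linear:
  "set_integrable lborel {0<..} (\<lambda>r::real. exp (- (r ^ 3 / 3)) * exp (a * r))"
proof (rule set_integrable_bound[OF _ _ AE_I2])
  define b where "b = \<bar>a\<bar> + 1"
  have "set_integrable lborel {0<..} (\<lambda>t::real. t powr (1 - 1) * exp (- t))"
    by (rule Gamma_set_integral(1)) simp
  then have "set_integrable lborel {0<..} (\<lambda>t::real. exp (- t))"
    by (rule set_integrable_cong[THEN iffD1, OF refl refl, rotated]) simp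
  then show "set_integrable lborel {0<..} (\<lambda>r::real. exp (b ^ 2 + 1) * exp (- r))"
    by simp
  show "set_borel_measurable lborel {0<..} (\<lambda>r::real. exp (- (r ^ 3 / 3)) * exp (a * r))"
    unfolding set_borel_measurable_def by measurable
  fix r :: real
  show "r \<in> {0<..} \<longrightarrow> norm (exp (- (r ^ 3 / 3)) * exp (a * r)) \<le> norm (exp (b ^ 2 + 1) * exp (- r))"
  proof
    assume "r \<in> {0<..}"
    then have r: "r \<ge> 0" by simp
    have "a * r \<le> (b - 1) * r" using r unfolding b_def by (intro mult_right_mono) auto
    then have "a * r - r ^ 3 / 3 \<le> (b ^ 2 + 1) - r"
      using linear_minus_cubic_le[OF r, of b] by (simp add: algebra_simps)
    then show "norm (exp (- (r ^ 3 / 3)) * exp (a * r)) \<le> norm (exp (b ^ 2 + 1) * exp (- r))"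
      by (simp add: exp_add[symmetric])
  qed
qed

(* Ai(x) = (1/\<pi>) Im \<integral>\<^sub>0\<^sup>\<infinity> \<omega> exp(-r^3/3 - x r \<omega>) dr with \<omega> = exp(i\<pi>/3): the contour integral
   for Ai along the rays arg t = \<plusminus>\<pi>/3. It is verified termwise against the Maclaurin series, and
   for x \<ge> 0 it bounds Ai by \<integral>\<^sub>0\<^sup>\<infinity> exp(-r^3/3) dr / \<pi>. *)

definition airy_rot :: complex where "airy_rot = cis (pi / 3)"

definition airy_phase :: "nat \<Rightarrow> real" where
  "airy_phase n = Im (airy_rot * (- airy_rot) ^ n)"

definition airy_kernel :: "real \<Rightarrow> real \<Rightarrow> real" where
  "airy_kernel x r = exp (- (r ^ 3 / 3)) * Im (airy_rot * exp (- (complex_of_real (x * r) * airy_rot)))"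

lemma airy_rot_cube: "airy_rot ^ 3 = -1"
  unfolding airy_rot_def Complex.DeMoivre by simp

lemma airy_phase_add3: "airy_phase (n + 3) = airy_phase n"
  by (simp add: airy_phase_def power_add airy_rot_cube)

lemma airy_phase_0: "airy_phase 0 = sqrt 3 / 2"
  and airy_phase_1: "airy_phase 1 = - sqrt 3 / 2"
  and airy_phase_2: "airy_phase 2 = 0"
proof -
  have "sin (2 * pi / 3) = sin (pi - pi / 3)" by (simp add: field_simps)
  also have "\<dots> = sqrt 3 / 2" by (simp only: sin_pi_minus sin_60)
  finally show "airy_phase 0 = sqrt 3 / 2" "airy_phase 1 = - sqrt 3 / 2"
    by (simp_all add: airy_phase_def airy_rot_def sin_60 Complex.DeMoivre power2_eq_square[symmetric])
  have "airy_rot * (- airy_rot) ^ 2 = airy_rot ^ 3"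
    by (simp add: power2_eq_square power3_eq_cube)
  then show "airy_phase 2 = 0"
    unfolding airy_phase_def airy_rot_cube by simp
qed

lemma abs_airy_phase_le: "\<bar>airy_phase n\<bar> \<le> 1"
proof -
  have "\<bar>airy_phase n\<bar> \<le> cmod (airy_rot * (- airy_rot) ^ n)"
    unfolding airy_phase_def by (rule abs_Im_le_cmod)
  also have "\<dots> = 1" by (simp add: airy_rot_def norm_mult norm_power)
  finally show ?thesis .
qed

lemma Ai_coeff_eq_airy_moment: "Ai_coeff n = airy_moment n * airy_phase n / (fact n * pi)"
proof (induction n rule: Ai_coeff.induct)
  case 1
  have "Gamma (2/3::real) \<noteq> 0" by (simp add: less_imp_neq[symmetric])
  then show ?case
    using Gamma_third_mult_Gamma_two_thirds
    by (simp add: airy_moment_eq_Gamma airy_phase_0 airy_c1_def powr_minus field_simps)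
next
  case 2
  have "Gamma (1/3::real) \<noteq> 0" by (simp add: less_imp_neq[symmetric])
  then show ?case
    using Gamma_third_mult_Gamma_two_thirds
    by (simp add: airy_moment_eq_Gamma airy_phase_1[unfolded One_nat_def] airy_c2_def powr_minus field_simps)
next
  case 3
  then show ?case by (simp add: airy_phase_2[unfolded numeral_2_eq_2])
next
  case (4 n)
  define N where "N = (real n + 2) * (real n + 3)"
  have N: "N \<noteq> 0" "real n + 1 \<noteq> 0"
    unfolding N_def by (simp_all add: add_nonneg_eq_0_iff)
  have fact3: "fact (n + 3) = (fact n :: real) * ((real n + 1) * N)"
    unfolding N_def by (simp add: numeral_3_eq_3 algebra_simps)
  have idx: "Suc (Suc (Suc n)) = n + 3" by simp
  have "airy_moment (n + 3) * airy_phase (n + 3) / (fact (n + 3) * pi)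
      = ((real n + 1) * (airy_moment n * airy_phase n)) / ((real n + 1) * (fact n * pi * N))"
    unfolding airy_moment_add3 airy_phase_add3 fact3 by (simp only: ac_simps)
  also have "\<dots> = airy_moment n * airy_phase n / (fact n * pi) / N"
    using N(2) by simp
  also have "\<dots> = Ai_coeff (n + 3)"
    unfolding Ai_coeff_add3 4 N_def ..
  finally show ?case
    unfolding idx ..
qed

lemma airy_kernel_sums:
  "(\<lambda>n. r ^ n * exp (- (r ^ 3 / 3)) * (airy_phase n * x ^ n / fact n)) sums airy_kernel x r"
proof -
  define z where "z = - (complex_of_real (x * r) * airy_rot)"
  have "(\<lambda>n. Im (airy_rot * (z ^ n /\<^sub>R fact n))) sums Im (airy_rot * exp z)"
    by (intro sums_Im sums_mult exp_converges)
  then have "(\<lambda>n. exp (- (r ^ 3 / 3)) * Im (airy_rot * (z ^ n /\<^sub>R fact n)))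
      sums (exp (- (r ^ 3 / 3)) * Im (airy_rot * exp z))"
    by (rule sums_mult)
  moreover have "exp (- (r ^ 3 / 3)) * Im (airy_rot * (z ^ n /\<^sub>R fact n))
      = r ^ n * exp (- (r ^ 3 / 3)) * (airy_phase n * x ^ n / fact n)" for n
  proof -
    have "z ^ n = complex_of_real ((x * r) ^ n) * (- airy_rot) ^ n"
      unfolding z_def by (simp add: power_mult_distrib[symmetric])
    then have "airy_rot * (z ^ n /\<^sub>R fact n) = complex_of_real ((x * r) ^ n / fact n) * (airy_rot * (- airy_rot) ^ n)"
      by (simp add: scaleR_conv_of_real field_simps)
    moreover have "Im (complex_of_real a * w) = a * Im w" for a w by simp
    ultimately have "Im (airy_rot * (z ^ n /\<^sub>R fact n)) = (x * r) ^ n / fact n * airy_phase n"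
      unfolding airy_phase_def by (simp only:)
    then show ?thesis by (simp add: power_mult_distrib field_simps)
  qed
  ultimately show ?thesis
    unfolding airy_kernel_def z_def by simp
qed

lemma abs_airy_kernel_partial_sum_le:
  assumes r: "r \<ge> 0"
  shows "\<bar>\<Sum>n<N. r ^ n * exp (- (r ^ 3 / 3)) * (airy_phase n * x ^ n / fact n)\<bar>
    \<le> exp (- (r ^ 3 / 3)) * exp (\<bar>x\<bar> * r)"
proof -
  have "\<bar>r ^ n * exp (- (r ^ 3 / 3)) * (airy_phase n * x ^ n / fact n)\<bar>
      \<le> exp (- (r ^ 3 / 3)) * ((\<bar>x\<bar> * r) ^ n / fact n)" for n
  proof -
    have "\<bar>r ^ n * exp (- (r ^ 3 / 3)) * (airy_phase n * x ^ n / fact n)\<bar>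
        = exp (- (r ^ 3 / 3)) * ((\<bar>x\<bar> * r) ^ n / fact n) * \<bar>airy_phase n\<bar>"
      using r by (simp add: abs_mult power_abs power_mult_distrib)
    also have "\<dots> \<le> exp (- (r ^ 3 / 3)) * ((\<bar>x\<bar> * r) ^ n / fact n) * 1"
      using abs_airy_phase_le r by (intro mult_left_mono) auto
    finally show ?thesis by simp
  qed
  then have "\<bar>\<Sum>n<N. r ^ n * exp (- (r ^ 3 / 3)) * (airy_phase n * x ^ n / fact n)\<bar>
      \<le> exp (- (r ^ 3 / 3)) * (\<Sum>n<N. (\<bar>x\<bar> * r) ^ n / fact n)"
    by (simp add: sum_distrib_left order_trans[OF sum_abs sum_mono])
  also have "\<dots> \<le> exp (- (r ^ 3 / 3)) * exp (\<bar>x\<bar> * r)"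
  proof (rule mult_left_mono)
    have exp: "(\<lambda>n. (\<bar>x\<bar> * r) ^ n / fact n) sums exp (\<bar>x\<bar> * r)"
      using exp_converges[of "\<bar>x\<bar> * r"] by (simp add: divide_inverse scaleR_conv_of_real mult.commute)
    then have "(\<Sum>n<N. (\<bar>x\<bar> * r) ^ n / fact n) \<le> (\<Sum>n. (\<bar>x\<bar> * r) ^ n / fact n)"
      using r by (intro sum_le_suminf) (auto simp: sums_iff)
    also have "\<dots> = exp (\<bar>x\<bar> * r)"
      using exp by (simp add: sums_iff)
    finally show "(\<Sum>n<N. (\<bar>x\<bar> * r) ^ n / fact n) \<le> exp (\<bar>x\<bar> * r)" .
  qed simp
  finally show ?thesis .
qed

lemma airy_kernel_set_integrable: "set_integrable lborel {0<..} (airy_kernel x)"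
  and airy_kernel_integral_sums:
    "(\<lambda>n. airy_moment n * (airy_phase n * x ^ n / fact n)) sums (LINT r:{0<..}|lborel. airy_kernel x r)"
proof -
  let ?f = "\<lambda>n r. r ^ n * exp (- (r ^ 3 / 3)) * (airy_phase n * x ^ n / fact n)"
  have int_f: "set_integrable lborel {0<..} (?f n)" for n
    using airy_moment_integrable[of n] by (rule set_integrable_mult_left)
  have meas: "set_borel_measurable lborel {0<..} (airy_kernel x)"
    unfolding set_borel_measurable_def airy_kernel_def by measurable
  have bound: "\<bar>\<Sum>n<N. ?f n r\<bar> \<le> exp (- (r ^ 3 / 3)) * exp (\<bar>x\<bar> * r)" if "r \<in> {0<..}" for N r
    using that by (intro abs_airy_kernel_partial_sum_le) simp
  note S = set_integral_sums_dominated[OF int_f meas set_integrable_exp_cubic_linear[of "\<bar>x\<bar>"]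
      airy_kernel_sums bound]
  show "set_integrable lborel {0<..} (airy_kernel x)"
    by (rule S(1))
  have "(LINT r:{0<..}|lborel. ?f n r) = airy_moment n * (airy_phase n * x ^ n / fact n)" for n
    unfolding airy_moment_def by (rule set_integral_mult_left)
  then show "(\<lambda>n. airy_moment n * (airy_phase n * x ^ n / fact n)) sums (LINT r:{0<..}|lborel. airy_kernel x r)"
    using S(2) by (simp only:)
qed

lemma Ai_integral_representation: "Ai x = (LINT r:{0<..}|lborel. airy_kernel x r) / pi"
proof -
  have "(\<lambda>n. airy_moment n * (airy_phase n * x ^ n / fact n) / pi) sums
      ((LINT r:{0<..}|lborel. airy_kernel x r) / pi)"
    by (intro sums_divide airy_kernel_integral_sums)
  then have "(\<lambda>n. Ai_coeff n * x ^ n) sums ((LINT r:{0<..}|lborel. airy_kernel x r) / pi)"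
    by (simp add: Ai_coeff_eq_airy_moment field_simps)
  then show ?thesis
    by (simp add: Ai_powser sums_iff)
qed

lemma abs_Ai_le:
  assumes x: "x \<ge> 0"
  shows "\<bar>Ai x\<bar> \<le> airy_moment 0 / pi"
proof -
  have kernel_bound: "\<bar>airy_kernel x r\<bar> \<le> exp (- (r ^ 3 / 3))" if r: "r \<ge> 0" for r
  proof -
    have "\<bar>Im (airy_rot * exp (- (complex_of_real (x * r) * airy_rot)))\<bar>
        \<le> cmod (airy_rot * exp (- (complex_of_real (x * r) * airy_rot)))"
      by (rule abs_Im_le_cmod)
    also have "\<dots> = exp (- (x * r) / 2)"
      by (simp add: airy_rot_def norm_mult norm_exp_eq_Re cos_60)
    also have "\<dots> \<le> 1"
      using x r by simp
    finally show ?thesis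
      unfolding airy_kernel_def by (simp add: abs_mult)
  qed
  have "\<bar>LINT r:{0<..}|lborel. airy_kernel x r\<bar> \<le> airy_moment 0"
    unfolding airy_moment_def set_lebesgue_integral_def
  proof (rule integral_abs_bound_integral)
    show "integrable lborel (\<lambda>r. indicat_real {0<..} r *\<^sub>R airy_kernel x r)"
      using airy_kernel_set_integrable[of x] unfolding set_integrable_def .
    show "integrable lborel (\<lambda>r::real. indicat_real {0<..} r *\<^sub>R (r ^ 0 * exp (- (r ^ 3 / 3))))"
      using airy_moment_integrable[of 0] unfolding set_integrable_def .
    fix r :: real
    show "\<bar>indicat_real {0<..} r *\<^sub>R airy_kernel x r\<bar> \<le> indicat_real {0<..} r *\<^sub>R (r ^ 0 * exp (- (r ^ 3 / 3)))"
      using kernel_bound[of r] by (auto simp: indicator_def)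
  qed
  then show ?thesis
    by (simp add: Ai_integral_representation divide_right_mono)
qed

section \<open>Ai on the half-line\<close>

lemma Gronwall_two_sided:
  fixes G G' :: "real \<Rightarrow> real"
  assumes ab: "a \<le> b"
    and deriv: "\<And>t. a \<le> t \<Longrightarrow> t \<le> b \<Longrightarrow> (G has_real_derivative G' t) (at t)"
    and bound: "\<And>t. a \<le> t \<Longrightarrow> t \<le> b \<Longrightarrow> \<bar>G' t\<bar> \<le> K * G t"
  shows "G a * exp (- K * (b - a)) \<le> G b" and "G b * exp (- K * (b - a)) \<le> G a"
proof -
  have "G a * exp (K * a) \<le> G b * exp (K * b)"
  proof (rule DERIV_nonneg_imp_nondecreasing[OF ab])
    fix t assume t: "a \<le> t" "t \<le> b"
    have "((\<lambda>t. G t * exp (K * t)) has_real_derivative (G' t + K * G t) * exp (K * t)) (at t)"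
      using deriv[OF t] by (auto intro!: derivative_eq_intros simp: algebra_simps)
    moreover have "0 \<le> (G' t + K * G t) * exp (K * t)"
      using bound[OF t] by simp
    ultimately show "\<exists>y. ((\<lambda>t. G t * exp (K * t)) has_real_derivative y) (at t) \<and> 0 \<le> y" by blast
  qed
  then show "G a * exp (- K * (b - a)) \<le> G b"
    by (simp add: exp_diff algebra_simps divide_le_eq)
  have "G b * exp (- K * b) \<le> G a * exp (- K * a)"
  proof (rule DERIV_nonpos_imp_nonincreasing[OF ab])
    fix t assume t: "a \<le> t" "t \<le> b"
    have "((\<lambda>t. G t * exp (- K * t)) has_real_derivative (G' t - K * G t) * exp (- K * t)) (at t)"
      using deriv[OF t] by (auto intro!: derivative_eq_intros simp: algebra_simps)
    moreover have "(G' t - K * G t) * exp (- K * t) \<le> 0"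
      using bound[OF t] by (simp add: mult_nonpos_nonneg)
    ultimately show "\<exists>y. ((\<lambda>t. G t * exp (- K * t)) has_real_derivative y) (at t) \<and> y \<le> 0" by blast
  qed
  from mult_right_mono[OF this, of "exp (K * a)"]
  show "G b * exp (- K * (b - a)) \<le> G a"
    by (simp add: mult.assoc exp_add[symmetric] algebra_simps)
qed

lemma mono_deriv_secant_bounds:
  fixes y y' :: "real \<Rightarrow> real"
  assumes deriv: "\<And>t. t \<ge> a \<Longrightarrow> (y has_real_derivative y' t) (at t)"
    and mono: "\<And>s t. a \<le> s \<Longrightarrow> s \<le> t \<Longrightarrow> y' s \<le> y' t"
    and st: "a \<le> s" "s \<le> t"
  shows "(t - s) * y' s \<le> y t - y s" and "y t - y s \<le> (t - s) * y' t"
proof -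
  have "\<exists>z. s \<le> z \<and> z \<le> t \<and> y t - y s = (t - s) * y' z"
  proof (cases "s = t")
    case False
    with st have "s < t" by simp
    then obtain z where "s < z" "z < t" "y t - y s = (t - s) * y' z"
      using MVT2[of s t y y'] deriv st by auto
    then show ?thesis by (intro exI[of _ z]) simp
  qed auto
  then obtain z where z: "s \<le> z" "z \<le> t" "y t - y s = (t - s) * y' z" by blast
  show "(t - s) * y' s \<le> y t - y s" "y t - y s \<le> (t - s) * y' t"
    unfolding z(3) using z st mono[of s z] mono[of z t] by (simp_all add: mult_left_mono)
qed

lemma bounded_mono_deriv_nonpos:
  fixes y y' :: "real \<Rightarrow> real"
  assumes deriv: "\<And>t. t \<ge> a \<Longrightarrow> (y has_real_derivative y' t) (at t)"
    and mono: "\<And>s t. a \<le> s \<Longrightarrow> s \<le> t \<Longrightarrow> y' s \<le> y' t"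
    and bounded: "\<And>t. t \<ge> a \<Longrightarrow> \<bar>y t\<bar> \<le> B"
    and s: "s \<ge> a"
  shows "y' s \<le> 0"
proof (rule ccontr)
  assume "\<not> y' s \<le> 0"
  then have pos: "y' s > 0" by simp
  define t where "t = s + (2 * B + 1) / y' s"
  have "B \<ge> 0" using bounded[of a] by simp
  then have "s \<le> t" unfolding t_def using pos by simp
  then have "(t - s) * y' s \<le> y t - y s"
    using s by (intro mono_deriv_secant_bounds(1)[OF deriv mono])
  moreover have "(t - s) * y' s = 2 * B + 1" unfolding t_def using pos by simp
  moreover have "\<bar>y t\<bar> \<le> B" "\<bar>y s\<bar> \<le> B" using bounded s \<open>s \<le> t\<close> by auto
  ultimately show False by linarith
qed

lemma bounded_mono_deriv_tendsto_0:
  fixes y y' :: "real \<Rightarrow> real"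
  assumes deriv: "\<And>t. t \<ge> a \<Longrightarrow> (y has_real_derivative y' t) (at t)"
    and mono: "\<And>s t. a \<le> s \<Longrightarrow> s \<le> t \<Longrightarrow> y' s \<le> y' t"
    and bounded: "\<And>t. t \<ge> a \<Longrightarrow> \<bar>y t\<bar> \<le> B"
  shows "(y' \<longlongrightarrow> 0) at_top"
proof (rule increasing_tendsto)
  show "\<forall>\<^sub>F t in at_top. y' t \<le> 0"
    unfolding eventually_at_top_linorder using bounded_mono_deriv_nonpos[OF deriv mono bounded] by blast
  fix e :: real assume e: "e < 0"
  show "\<forall>\<^sub>F t in at_top. e < y' t"
  proof (cases "\<exists>t0\<ge>a. e < y' t0")
    case True
    then obtain t0 where "t0 \<ge> a" "e < y' t0" by blast
    then show ?thesis
      unfolding eventually_at_top_linorder by (intro exI[of _ t0]) (auto intro: less_le_trans mono)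
  next
    case False
    define t where "t = a + (2 * B + 1) / (- e)"
    have "B \<ge> 0" using bounded[of a] by simp
    then have "(2 * B + 1) / (- e) > 0" using e by (intro divide_pos_pos) auto
    then have "a \<le> t" unfolding t_def by simp
    then have "y t - y a \<le> (t - a) * y' t"
      by (intro mono_deriv_secant_bounds(2)[OF deriv mono]) auto
    also have "\<dots> \<le> (t - a) * e"
      using False \<open>a \<le> t\<close> by (intro mult_left_mono) (auto simp: not_less)
    also have "(t - a) * e = - (2 * B + 1)" unfolding t_def using e by simp
    finally show ?thesis
      using bounded[of t] bounded[of a] \<open>a \<le> t\<close> by linarith
  qed
qed

lemma Ai_sq_add_Ai'_sq_pos: "(Ai t)\<^sup>2 + (Ai' t)\<^sup>2 > 0"
proof -
  define G where "G s = (Ai s)\<^sup>2 + (Ai' s)\<^sup>2" for s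
  define K where "K = 1 + \<bar>t\<bar>"
  have deriv: "(G has_real_derivative 2 * Ai s * Ai' s * (1 + s)) (at s)" for s
    unfolding G_def by (auto intro!: derivative_eq_intros simp: algebra_simps power2_eq_square)
  have bound: "\<bar>2 * Ai s * Ai' s * (1 + s)\<bar> \<le> K * G s" if "\<bar>s\<bar> \<le> \<bar>t\<bar>" for s
  proof -
    have "\<bar>2 * Ai s * Ai' s\<bar> \<le> G s"
      using zero_le_power2[of "\<bar>Ai s\<bar> - \<bar>Ai' s\<bar>"]
      unfolding G_def by (simp add: abs_mult power2_eq_square algebra_simps)
    moreover have "\<bar>1 + s\<bar> \<le> K" using that unfolding K_def by linarith
    ultimately have "\<bar>2 * Ai s * Ai' s\<bar> * \<bar>1 + s\<bar> \<le> G s * K"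
      by (intro mult_mono) auto
    then show ?thesis by (simp add: abs_mult mult.commute)
  qed
  have "G 0 > 0"
    unfolding G_def Ai_at_0 using airy_c1_pos by (intro add_pos_nonneg) auto
  moreover have "G 0 * exp (- K * \<bar>t\<bar>) \<le> G t"
  proof (cases "t \<ge> 0")
    case True
    then show ?thesis
      using Gronwall_two_sided(1)[of 0 t G "\<lambda>s. 2 * Ai s * Ai' s * (1 + s)" K] deriv bound by simp
  next
    case False
    then show ?thesis
      using Gronwall_two_sided(2)[of t 0 G "\<lambda>s. 2 * Ai s * Ai' s * (1 + s)" K] deriv bound by simp
  qed
  ultimately show ?thesis
    unfolding G_def by (smt (verit) exp_gt_zero mult_pos_pos)
qed

lemma DERIV_Ai_mul_Ai': "((\<lambda>t. Ai t * Ai' t) has_real_derivative (Ai' t)\<^sup>2 + t * (Ai t)\<^sup>2) (at t)"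
  by (auto intro!: derivative_eq_intros simp: algebra_simps power2_eq_square)

lemma DERIV_Ai_sq: "((\<lambda>t. (Ai t)\<^sup>2) has_real_derivative 2 * (Ai t * Ai' t)) (at t)"
  by (auto intro!: derivative_eq_intros simp: algebra_simps)

lemma Ai_mul_Ai'_mono: "0 \<le> s \<Longrightarrow> s \<le> t \<Longrightarrow> Ai s * Ai' s \<le> Ai t * Ai' t"
  by (rule DERIV_nonneg_imp_nondecreasing[of s t]) (auto intro!: exI DERIV_Ai_mul_Ai')

lemma Ai_mul_Ai'_nonpos: "x \<ge> 0 \<Longrightarrow> Ai x * Ai' x \<le> 0"
  and Ai_mul_Ai'_tendsto_0: "((\<lambda>t. Ai t * Ai' t) \<longlongrightarrow> 0) at_top"
proof -
  have deriv: "((\<lambda>t. (Ai t)\<^sup>2) has_real_derivative 2 * (Ai t * Ai' t)) (at t)" if "t \<ge> 0" for t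
    by (rule DERIV_Ai_sq)
  have mono: "2 * (Ai s * Ai' s) \<le> 2 * (Ai t * Ai' t)" if "0 \<le> s" "s \<le> t" for s t
    using Ai_mul_Ai'_mono[OF that] by simp
  have bounded: "\<bar>(Ai t)\<^sup>2\<bar> \<le> (airy_moment 0 / pi)\<^sup>2" if "t \<ge> 0" for t
    using power_mono[OF abs_Ai_le[OF that] abs_ge_zero, of 2] by simp
  show "x \<ge> 0 \<Longrightarrow> Ai x * Ai' x \<le> 0"
    using bounded_mono_deriv_nonpos[OF deriv mono bounded, of x] by (simp add: mult.commute)
  have "((\<lambda>t. 1/2 * (2 * (Ai t * Ai' t))) \<longlongrightarrow> 1/2 * 0) at_top"
    by (intro tendsto_mult_left bounded_mono_deriv_tendsto_0[OF deriv mono bounded])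
  then show "((\<lambda>t. Ai t * Ai' t) \<longlongrightarrow> 0) at_top" by simp
qed

lemma Ai_pos: "x \<ge> 0 \<Longrightarrow> Ai x > 0"
proof (rule ccontr)
  assume x: "x \<ge> 0" and "\<not> Ai x > 0"
  then obtain a where a: "0 \<le> a" "a \<le> x" "Ai a = 0"
    using IVT2[of Ai x 0 0] Ai_at_0 airy_c1_pos isCont_Ai by force
  have "Ai a * Ai' a \<le> Ai (a + 1) * Ai' (a + 1)" "Ai (a + 1) * Ai' (a + 1) \<le> 0"
    using a Ai_mul_Ai'_mono[of a "a + 1"] Ai_mul_Ai'_nonpos[of "a + 1"] by simp_all
  then have flat: "Ai (a + 1) * Ai' (a + 1) - Ai a * Ai' a = 0"
    using a by simp
  obtain z where z: "a < z" "z < a + 1"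
    "Ai (a + 1) * Ai' (a + 1) - Ai a * Ai' a = (a + 1 - a) * ((Ai' z)\<^sup>2 + z * (Ai z)\<^sup>2)"
    using MVT2[of a "a + 1" "\<lambda>t. Ai t * Ai' t" "\<lambda>t. (Ai' t)\<^sup>2 + t * (Ai t)\<^sup>2"] DERIV_Ai_mul_Ai'
    by auto
  have "z * (Ai z)\<^sup>2 \<ge> 0" using z a by simp
  then have "(Ai' z)\<^sup>2 = 0" "z * (Ai z)\<^sup>2 = 0"
    using z(3) flat by (simp_all add: add_nonneg_eq_0_iff)
  then have "(Ai z)\<^sup>2 + (Ai' z)\<^sup>2 = 0" using z a by simp
  then show False using Ai_sq_add_Ai'_sq_pos[of z] by simp
qed

lemma Ai'_nonpos: "x \<ge> 0 \<Longrightarrow> Ai' x \<le> 0"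
  using Ai_mul_Ai'_nonpos[of x] Ai_pos[of x] by (simp add: mult_le_0_iff)

lemma Ai_antimono: "0 \<le> s \<Longrightarrow> s \<le> t \<Longrightarrow> Ai t \<le> Ai s"
  by (rule DERIV_nonpos_imp_nonincreasing[of s t]) (auto intro!: exI DERIV_Ai Ai'_nonpos)

lemma minus_Ai'_less:
  assumes y: "y \<ge> 0"
  shows "- Ai' y < (y + 2) * Ai y"
proof -
  obtain \<xi> where \<xi>: "y < \<xi>" "\<xi> < y + 1" "Ai (y + 1) - Ai y = (y + 1 - y) * Ai' \<xi>"
    using MVT2[of y "y + 1" Ai Ai'] DERIV_Ai by auto
  obtain \<eta> where \<eta>: "y < \<eta>" "\<eta> < \<xi>" "Ai' \<xi> - Ai' y = (\<xi> - y) * (\<eta> * Ai \<eta>)"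
    using MVT2[of y \<xi> Ai' "\<lambda>t. t * Ai t"] DERIV_Ai' \<xi>(1) by auto
  have "\<eta> * Ai \<eta> \<le> (y + 1) * Ai y"
    using \<eta> \<xi> y Ai_antimono[of y \<eta>] Ai_pos[of \<eta>] by (intro mult_mono) auto
  moreover have "(\<xi> - y) * (\<eta> * Ai \<eta>) \<le> 1 * (\<eta> * Ai \<eta>)"
    using \<xi> \<eta> y Ai_pos[of \<eta>] by (intro mult_right_mono) auto
  moreover have "Ai (y + 1) > 0" using y by (intro Ai_pos) simp
  ultimately show ?thesis using \<xi>(3) \<eta>(3) by (simp add: algebra_simps)
qed

lemma set_integrable_Ai_energy: "set_integrable lborel {0<..} (\<lambda>t. (Ai' t)\<^sup>2 + t * (Ai t)\<^sup>2)"
proof -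
  have lim0: "(((\<lambda>t. Ai t * Ai' t) \<circ> real_of_ereal) \<longlongrightarrow> Ai 0 * Ai' 0) (at_right 0)"
    unfolding zero_ereal_def ereal_tendsto_simps
    by (intro tendsto_intros tendsto_at_within_iff_tendsto_nhds[THEN iffD1] isCont_tendsto_compose[OF isCont_Ai]
        isCont_tendsto_compose[OF isCont_Ai'] tendsto_ident_at) 
  have lim_inf: "(((\<lambda>t. Ai t * Ai' t) \<circ> real_of_ereal) \<longlongrightarrow> 0) (at_left \<infinity>)"
    unfolding ereal_tendsto_simps by (rule Ai_mul_Ai'_tendsto_0)
  have "set_integrable lborel (einterval 0 \<infinity>) (\<lambda>t. (Ai' t)\<^sup>2 + t * (Ai t)\<^sup>2)"
    by (rule interval_integral_FTC_nonneg[OF _ DERIV_Ai_mul_Ai' _ _ lim0 lim_inf])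
       (auto simp: zero_ereal_def intro!: continuous_intros isCont_Ai isCont_Ai')
  then show ?thesis by (simp add: zero_ereal_def)
qed

lemma set_integrable_Ai'_sq_Ioi: "set_integrable lborel {0<..} (\<lambda>t. (Ai' t)\<^sup>2)"
  and set_integrable_mult_Ai_sq_Ioi: "set_integrable lborel {0<..} (\<lambda>t. t * (Ai t)\<^sup>2)"
  by (auto intro!: set_integrable_bound[OF set_integrable_Ai_energy] AE_I2
      simp: set_borel_measurable_def)

lemma set_integrable_Ai_sq_Ioi: "set_integrable lborel {0<..} (\<lambda>t. (Ai t)\<^sup>2)"
proof -
  have "set_integrable lborel {0..1} (\<lambda>t. (Ai t)\<^sup>2)"
    by (intro borel_integrable_atLeastAtMost' continuous_intros)
  then have "set_integrable lborel {0<..1} (\<lambda>t. (Ai t)\<^sup>2)"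
    by (rule set_integrable_subset) auto
  moreover have "set_integrable lborel {1<..} (\<lambda>t. (Ai t)\<^sup>2)"
  proof (rule set_integrable_bound[OF set_integrable_subset[OF set_integrable_mult_Ai_sq_Ioi]])
    show "AE t in lborel. t \<in> {1<..} \<longrightarrow> norm ((Ai t)\<^sup>2) \<le> norm (t * (Ai t)\<^sup>2)"
      by (intro AE_I2 impI) (simp add: mult_le_cancel_right1 abs_mult)
  qed (auto simp: set_borel_measurable_def)
  ultimately have "set_integrable lborel ({0<..1} \<union> {1<..}) (\<lambda>t. (Ai t)\<^sup>2)"
    by (rule set_integrable_Un) auto
  moreover have "{0<..1} \<union> {1<..} = ({0<..} :: real set)" by auto
  ultimately show ?thesis by simp
qed

section \<open>The first zero of Ai\<close>

(* Sturm comparison with sin (t - a): on [-1 - \<pi>, -1] the coefficient -t of Ai'' = t Ai exceeds 1. *)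

lemma Ai_has_zero_below_minus_1: "\<exists>z. - 1 - pi \<le> z \<and> z \<le> - 1 \<and> Ai z = 0"
proof (rule ccontr)
  define a where "a = - 1 - pi"
  assume "\<nexists>z. - 1 - pi \<le> z \<and> z \<le> - 1 \<and> Ai z = 0"
  then have no_zero: "Ai t \<noteq> 0" if "a \<le> t" "t \<le> a + pi" for t
    using that unfolding a_def by auto
  define \<sigma> where "\<sigma> = sgn (Ai a)"
  have \<sigma>_a: "\<sigma> * Ai a > 0"
    using no_zero[of a] by (auto simp: \<sigma>_def sgn_if)
  have \<sigma>: "\<sigma> * Ai t > 0" if t: "a \<le> t" "t \<le> a + pi" for t
  proof (rule ccontr)
    assume "\<not> \<sigma> * Ai t > 0"
    then obtain w where w: "a \<le> w" "w \<le> t" "\<sigma> * Ai w = 0"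
      using IVT2[of "\<lambda>t. \<sigma> * Ai t" t 0 a] t \<sigma>_a by (force intro: continuous_intros isCont_Ai)
    have "\<sigma> \<noteq> 0" using \<sigma>_a by auto
    then show False
      using no_zero[of w] w t by simp
  qed
  define W where "W t = \<sigma> * (Ai t * cos (t - a) - Ai' t * sin (t - a))" for t
  have W_deriv: "\<exists>y. (W has_real_derivative y) (at t) \<and> 0 \<le> y" if t: "a \<le> t" "t \<le> a + pi" for t
  proof -
    have deriv: "(W has_real_derivative - (1 + t) * sin (t - a) * (\<sigma> * Ai t)) (at t)"
      unfolding W_def by (auto intro!: derivative_eq_intros simp: algebra_simps)
    have "0 \<le> - (1 + t) * sin (t - a)"
      using t unfolding a_def by (intro mult_nonneg_nonneg sin_ge_zero) auto
    then have "0 \<le> - (1 + t) * sin (t - a) * (\<sigma> * Ai t)"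
      using \<sigma>[OF t] by simp
    with deriv show ?thesis by blast
  qed
  have "W a \<le> W (a + pi)"
    by (rule DERIV_nonneg_imp_nondecreasing[OF _ W_deriv]) simp_all
  moreover have "W a = \<sigma> * Ai a" "W (a + pi) = - (\<sigma> * Ai (a + pi))"
    unfolding W_def by simp_all
  ultimately show False
    using \<sigma>[of a] \<sigma>[of "a + pi"] by simp
qed

lemma Ai_zero_neg: "Ai z = 0 \<Longrightarrow> z < 0"
  using Ai_pos[of z] by force

lemma Ai_greatest_zero: "\<exists>z. Ai z = 0 \<and> (\<forall>t. Ai t = 0 \<longrightarrow> t \<le> z)"
proof -
  define Z where "Z = {- 1 - pi..0} \<inter> {z. Ai z = 0}"
  have "compact Z"
    unfolding Z_def by (intro compact_Int_closed compact_Icc closed_Collect_eq continuous_intros)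
  moreover have "Z \<noteq> {}"
    using Ai_has_zero_below_minus_1 unfolding Z_def by force
  ultimately obtain z where z: "z \<in> Z" and z_max: "\<And>t. t \<in> Z \<Longrightarrow> t \<le> z"
    by (meson compact_attains_sup)
  have "t \<le> z" if t: "Ai t = 0" for t
  proof (cases "t \<ge> - 1 - pi")
    case True
    then have "t \<in> Z" unfolding Z_def using t Ai_zero_neg[OF t] by auto
    then show ?thesis by (rule z_max)
  next
    case False
    then show ?thesis using z unfolding Z_def by auto
  qed
  with z show ?thesis unfolding Z_def by auto
qed

lemma
  shows x0_pos: "x0 > 0"
    and Ai_minus_x0: "Ai (- x0) = 0"
    and x0_le_abs_zero: "Ai z = 0 \<Longrightarrow> x0 \<le> \<bar>z\<bar>"
proof -
  obtain z where z: "Ai z = 0" and z_max: "\<And>t. Ai t = 0 \<Longrightarrow> t \<le> z"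
    using Ai_greatest_zero by blast
  have abs_eq: "\<bar>t\<bar> = - t" if "Ai t = 0" for t
    using Ai_zero_neg[OF that] by simp
  have x0_eq: "x0 = - z"
    unfolding x0_def
  proof (rule the_equality)
    show "- z > 0 \<and> Ai (- (- z)) = 0 \<and> (\<forall>t. Ai t = 0 \<longrightarrow> - z \<le> \<bar>t\<bar>)"
      using z z_max Ai_zero_neg[OF z] abs_eq by auto
    fix b assume b: "0 < b \<and> Ai (- b) = 0 \<and> (\<forall>t. Ai t = 0 \<longrightarrow> b \<le> \<bar>t\<bar>)"
    then show "b = - z"
      using z z_max[of "- b"] abs_eq[OF z] by force
  qed
  show "x0 > 0" "Ai (- x0) = 0" "Ai t = 0 \<Longrightarrow> x0 \<le> \<bar>t\<bar>" for t
    unfolding x0_eq using z z_max[of t] Ai_zero_neg[OF z] abs_eq[of t] by auto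
qed

lemma Ai_pos_gt_minus_x0:
  assumes "z > - x0"
  shows "Ai z > 0"
proof (rule ccontr)
  assume "\<not> Ai z > 0"
  moreover have "Ai 0 > 0" by (rule Ai_pos) simp
  ultimately have "z < 0" using Ai_pos[of z] by force
  with \<open>\<not> Ai z > 0\<close> \<open>Ai 0 > 0\<close> obtain w where w: "z \<le> w" "w \<le> 0" "Ai w = 0"
    using IVT[of Ai z 0 0] isCont_Ai by force
  then show False
    using x0_le_abs_zero[OF w(3)] assms by simp
qed

section \<open>The constants Cbar, C1, C2\<close>

lemma set_integral_halfline_affine:
  fixes h :: "real \<Rightarrow> real"
  assumes l: "l > 0" and h: "set_integrable lborel {a..} h"
  shows "set_integrable lborel {0..} (\<lambda>x. h (l * x + a))"
    and "(LINT x:{0..}|lborel. h (l * x + a)) = (LINT u:{a..}|lborel. h u) / l"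
proof -
  define g where "g u = indicator {a..} u * h u" for u
  have g: "integrable lborel g" using h unfolding set_integrable_def g_def by simp
  have g_affine: "indicator {0..} x * h (l * x + a) = g (a + l * x)" for x
    using l unfolding g_def by (auto simp: indicator_def algebra_simps zero_le_mult_iff)
  have "integrable lborel (\<lambda>x. g (a + l * x))"
    using g l by (subst lborel_integrable_real_affine_iff) auto
  then show "set_integrable lborel {0..} (\<lambda>x. h (l * x + a))"
    unfolding set_integrable_def by (simp add: g_affine)
  have "integral\<^sup>L lborel g = l * integral\<^sup>L lborel (\<lambda>x. g (a + l * x))"
    using l lborel_integral_real_affine[of l g a] by simp
  then show "(LINT x:{0..}|lborel. h (l * x + a)) = (LINT u:{a..}|lborel. h u) / l"
    using l unfolding set_lebesgue_integral_def by (simp add: g_affine g_def[symmetric])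
qed

lemma set_integrable_Ici_if_Ioi:
  fixes f :: "real \<Rightarrow> real"
  assumes "a \<le> 0" and "continuous_on {a..0} f" and "set_integrable lborel {0<..} f"
  shows "set_integrable lborel {a..} f"
proof -
  have "set_integrable lborel ({a..0} \<union> {0<..}) f"
    using assms by (intro set_integrable_Un borel_integrable_atLeastAtMost') auto
  moreover have "{a..0} \<union> {0<..} = {a..}" using assms(1) by auto
  ultimately show ?thesis by simp
qed

lemma set_integral_pos_if_pos_on_Icc:
  fixes f :: "real \<Rightarrow> real"
  assumes int: "set_integrable lborel A f" and nonneg: "\<And>x. x \<in> A \<Longrightarrow> f x \<ge> 0"
    and cd: "c < d" "{c..d} \<subseteq> A" and cont: "continuous_on {c..d} f"
    and pos: "\<And>x. x \<in> {c..d} \<Longrightarrow> f x > 0"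
  shows "(LINT x:A|lborel. f x) > 0"
proof -
  obtain s where s: "s \<in> {c..d}" "\<And>t. t \<in> {c..d} \<Longrightarrow> f s \<le> f t"
    using continuous_attains_inf[OF compact_Icc _ cont] cd by auto
  have "(LINT x:{c..d}|lborel. f s) \<le> (LINT x:A|lborel. f x)"
    unfolding set_lebesgue_integral_def
  proof (rule Bochner_Integration.integral_mono)
    show "integrable lborel (\<lambda>x. indicat_real {c..d} x *\<^sub>R f s)"
      by (simp add: integrable_real_indicator emeasure_lborel_Icc_eq)
    show "integrable lborel (\<lambda>x. indicat_real A x *\<^sub>R f x)"
      using int unfolding set_integrable_def .
    show "indicat_real {c..d} x *\<^sub>R f s \<le> indicat_real A x *\<^sub>R f x" for x
      using s cd nonneg[of x] by (auto simp: indicator_def)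
  qed
  moreover have "(LINT x:{c..d}|lborel. f s) = f s * (d - c)"
    using cd by (simp add: set_integral_const)
  moreover have "f s * (d - c) > 0"
    using pos[OF s(1)] cd by simp
  ultimately show ?thesis by linarith
qed

lemma set_integrable_Ai_sq: "set_integrable lborel {- x0..} (\<lambda>u. (Ai u)\<^sup>2)"
  and set_integrable_Ai'_sq: "set_integrable lborel {- x0..} (\<lambda>u. (Ai' u)\<^sup>2)"
  and set_integrable_mult_Ai_sq: "set_integrable lborel {- x0..} (\<lambda>u. u * (Ai u)\<^sup>2)"
  using x0_pos set_integrable_Ai_sq_Ioi set_integrable_Ai'_sq_Ioi set_integrable_mult_Ai_sq_Ioi
  by (auto intro!: set_integrable_Ici_if_Ioi continuous_intros)

lemma set_integrable_shifted_mult_Ai_sq: "set_integrable lborel {- x0..} (\<lambda>u. (u + x0) * (Ai u)\<^sup>2)"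
  using set_integral_add(1)[OF set_integrable_mult_Ai_sq set_integrable_mult_right[OF set_integrable_Ai_sq, of x0]]
  by (simp add: algebra_simps)

lemma set_integral_shift_x0:
  fixes h :: "real \<Rightarrow> real"
  shows "set_integrable lborel {- x0..} h \<Longrightarrow> (LINT x:{0..}|lborel. h (x - x0)) = (LINT u:{- x0..}|lborel. h u)"
  using set_integral_halfline_affine(2)[of 1 "- x0" h] by simp

lemma deriv_Ai_shift: "deriv (\<lambda>y. Ai (y - x0)) x = Ai' (x - x0)"
  by (rule DERIV_imp_deriv) (auto intro!: derivative_eq_intros)

lemma inverse_Cbar_eq: "1 / Cbar = (LINT u:{- x0..}|lborel. (Ai u)\<^sup>2)"
  by (simp add: Cbar_def set_integral_shift_x0[OF set_integrable_Ai_sq])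

lemma C1_eq: "C1 = (LINT u:{- x0..}|lborel. (u + x0) * (Ai u)\<^sup>2)"
  using set_integral_shift_x0[OF set_integrable_shifted_mult_Ai_sq] by (simp add: C1_def)

lemma C2_eq: "C2 = (LINT u:{- x0..}|lborel. (Ai' u)\<^sup>2)"
  using set_integral_shift_x0[OF set_integrable_Ai'_sq] by (simp add: C2_def deriv_Ai_shift)

lemma Ai_nonzero: "x \<ge> 0 \<Longrightarrow> Ai x \<noteq> 0"
  using Ai_pos[of x] by simp

lemma Cbar_pos: "Cbar > 0"
proof -
  have "(LINT u:{- x0..}|lborel. (Ai u)\<^sup>2) > 0"
    using x0_pos Ai_nonzero
    by (intro set_integral_pos_if_pos_on_Icc[of _ _ 0 1] set_integrable_Ai_sq continuous_intros) auto
  then show ?thesis using inverse_Cbar_eq by (metis zero_less_divide_1_iff)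
qed

lemma C1_pos: "C1 > 0"
  unfolding C1_eq using x0_pos Ai_nonzero
  by (intro set_integral_pos_if_pos_on_Icc[of _ _ 0 1] set_integrable_shifted_mult_Ai_sq continuous_intros)
    (auto intro!: mult_pos_pos add_nonneg_pos)

(* Integrate (Ai Ai')' = Ai'^2 + u Ai^2 over [-x0, \<infinity>); Ai Ai' vanishes at both ends. *)

lemma energy_identity: "C2 + C1 = x0 / Cbar"
proof -
  have int: "set_integrable lborel {- x0..} (\<lambda>u. (Ai' u)\<^sup>2 + u * (Ai u)\<^sup>2)"
    by (intro set_integral_add set_integrable_Ai'_sq set_integrable_mult_Ai_sq)
  have lim_left: "(((\<lambda>t. Ai t * Ai' t) \<circ> real_of_ereal) \<longlongrightarrow> Ai (- x0) * Ai' (- x0)) (at_right (ereal (- x0)))"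
    unfolding ereal_tendsto_simps
    by (intro tendsto_intros tendsto_at_within_iff_tendsto_nhds[THEN iffD1] isCont_tendsto_compose[OF isCont_Ai]
        isCont_tendsto_compose[OF isCont_Ai'] tendsto_ident_at)
  have lim_right: "(((\<lambda>t. Ai t * Ai' t) \<circ> real_of_ereal) \<longlongrightarrow> 0) (at_left \<infinity>)"
    unfolding ereal_tendsto_simps by (rule Ai_mul_Ai'_tendsto_0)
  have "(LBINT u=ereal (- x0)..\<infinity>. (Ai' u)\<^sup>2 + u * (Ai u)\<^sup>2) = 0 - Ai (- x0) * Ai' (- x0)"
    by (rule interval_integral_FTC_integrable[OF _ _ _ set_integrable_subset[OF int] lim_left lim_right])
       (auto simp: has_real_derivative_iff_has_vector_derivative[symmetric] DERIV_Ai_mul_Ai'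
         intro!: continuous_intros isCont_Ai isCont_Ai')
  then have "(LINT u:{- x0<..}|lborel. (Ai' u)\<^sup>2 + u * (Ai u)\<^sup>2) = 0"
    by (simp add: interval_integral_to_infinity_eq Ai_minus_x0)
  moreover have "(LINT u:{- x0<..}|lborel. (Ai' u)\<^sup>2 + u * (Ai u)\<^sup>2) = (LINT u:{- x0..}|lborel. (Ai' u)\<^sup>2 + u * (Ai u)\<^sup>2)"
    using AE_lborel_singleton[of "- x0"]
    by (intro set_integral_cong_set) (auto simp: set_borel_measurable_def elim!: eventually_mono)
  moreover have "(LINT u:{- x0..}|lborel. (Ai' u)\<^sup>2 + u * (Ai u)\<^sup>2) = C2 + C1 - x0 / Cbar"
  proof -
    have "(\<lambda>u. (Ai' u)\<^sup>2 + u * (Ai u)\<^sup>2) = (\<lambda>u. ((Ai' u)\<^sup>2 + (u + x0) * (Ai u)\<^sup>2) - x0 * (Ai u)\<^sup>2)"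
      by (simp add: algebra_simps)
    then show ?thesis
      using set_integrable_Ai'_sq set_integrable_shifted_mult_Ai_sq set_integrable_Ai_sq
      by (simp add: set_integral_diff set_integral_add C1_eq C2_eq inverse_Cbar_eq[symmetric])
  qed
  ultimately show ?thesis by simp
qed

section \<open>The Airy profiles\<close>

lemma H1_0_scaled_Ai:
  assumes l: "l > 0"
  shows "H1_0 (\<lambda>x. complex_of_real k * complex_of_real (Ai (l * x - x0)))
              (\<lambda>x. complex_of_real (k * l * Ai' (l * x - x0)))"
  unfolding H1_0_def
proof (intro conjI allI impI)
  show "(\<lambda>x. complex_of_real (k * l * Ai' (l * x - x0))) \<in> borel_measurable lborel"
    by measurable
  fix x :: real assume x: "0 \<le> x"
  show "set_integrable lborel {0..x} (\<lambda>x. complex_of_real (k * l * Ai' (l * x - x0)))"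
    by (intro borel_integrable_atLeastAtMost' continuous_intros)
  have "(LBINT t=ereal 0..ereal x. complex_of_real (k * l * Ai' (l * t - x0)))
      = complex_of_real (k * Ai (l * x - x0)) - complex_of_real (k * Ai (l * 0 - x0))"
  proof (rule interval_integral_FTC_finite)
    show "continuous_on {min 0 x..max 0 x} (\<lambda>t. complex_of_real (k * l * Ai' (l * t - x0)))"
      by (intro continuous_intros)
    fix t
    have "((\<lambda>t. k * Ai (l * t - x0)) has_real_derivative k * l * Ai' (l * t - x0)) (at t)"
      by (auto intro!: derivative_eq_intros)
    then show "((\<lambda>t. complex_of_real (k * Ai (l * t - x0))) has_vector_derivative
        complex_of_real (k * l * Ai' (l * t - x0))) (at t within {min 0 x..max 0 x})"
      by (intro has_vector_derivative_of_real has_vector_derivative_at_within)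
  qed
  from this[symmetric] show "complex_of_real k * complex_of_real (Ai (l * x - x0))
      = (LINT t:{0..x}|lborel. complex_of_real (k * l * Ai' (l * t - x0)))"
    using x Ai_minus_x0 by (simp add: interval_integral_Icc zero_ereal_def)
next
  show "set_integrable lborel {0..} (\<lambda>x. (cmod (complex_of_real k * complex_of_real (Ai (l * x - x0))))\<^sup>2)"
    using set_integral_halfline_affine(1)[OF l set_integrable_mult_right[OF set_integrable_Ai_sq, of "k\<^sup>2"]]
    by (simp add: norm_mult power_mult_distrib)
  show "set_integrable lborel {0..} (\<lambda>x. (cmod (complex_of_real (k * l * Ai' (l * x - x0))))\<^sup>2)"
    using set_integral_halfline_affine(1)[OF l set_integrable_mult_right[OF set_integrable_Ai'_sq, of "(k * l)\<^sup>2"]]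
    by (simp only: norm_of_real power2_abs) (simp add: power_mult_distrib)
qed

lemma scaled_Ai_integrals:
  fixes k l :: real
  assumes l: "l > 0"
  defines "\<psi> \<equiv> \<lambda>x. complex_of_real k * complex_of_real (Ai (l * x - x0))"
  shows "(LINT x:{0..}|lborel. (cmod (\<psi> x))\<^sup>2) = k\<^sup>2 / (Cbar * l)"
    and "set_integrable lborel {0..} (\<lambda>x. x * (cmod (\<psi> x))\<^sup>2)"
    and "moment \<psi> = k\<^sup>2 * C1 / l\<^sup>2"
    and "defect (\<lambda>x. complex_of_real (k * l * Ai' (l * x - x0))) = k\<^sup>2 * l * C2"
proof -
  have norm: "(cmod (\<psi> x))\<^sup>2 = k\<^sup>2 * (Ai (l * x - x0))\<^sup>2" for x
    by (simp add: \<psi>_def norm_mult power_mult_distrib)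
  have weighted: "x * (cmod (\<psi> x))\<^sup>2 = k\<^sup>2 / l * ((l * x - x0 + x0) * (Ai (l * x - x0))\<^sup>2)" for x
    using l by (simp add: norm field_simps)
  show "(LINT x:{0..}|lborel. (cmod (\<psi> x))\<^sup>2) = k\<^sup>2 / (Cbar * l)"
    using set_integral_halfline_affine(2)[OF l set_integrable_mult_right[OF set_integrable_Ai_sq, of "k\<^sup>2"]]
    by (simp add: norm inverse_Cbar_eq[symmetric])
  note M = set_integral_halfline_affine[OF l set_integrable_mult_right[OF set_integrable_shifted_mult_Ai_sq, of "k\<^sup>2 / l"]]
  show "set_integrable lborel {0..} (\<lambda>x. x * (cmod (\<psi> x))\<^sup>2)"
    using M(1) by (simp add: weighted)
  show "moment \<psi> = k\<^sup>2 * C1 / l\<^sup>2"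
    using M(2) unfolding moment_def weighted by (simp add: C1_eq power2_eq_square)
  have "defect (\<lambda>x. complex_of_real (k * l * Ai' (l * x - x0)))
      = (LINT x:{0..}|lborel. (k * l)\<^sup>2 * (Ai' (l * x + - x0))\<^sup>2)"
    unfolding defect_def norm_of_real power2_abs by (simp add: power_mult_distrib)
  also have "\<dots> = (LINT u:{- x0..}|lborel. (k * l)\<^sup>2 * (Ai' u)\<^sup>2) / l"
    by (rule set_integral_halfline_affine(2)[OF l set_integrable_mult_right[OF set_integrable_Ai'_sq]])
  also have "\<dots> = k\<^sup>2 * l * C2"
    using l by (simp add: C2_eq power_mult_distrib power2_eq_square)
  finally show "defect (\<lambda>x. complex_of_real (k * l * Ai' (l * x - x0))) = k\<^sup>2 * l * C2" .
qed

lemma Ai_profile_attains_bound: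
  assumes m: "m > 0"
  shows "\<exists>c :: complex. \<exists>g.
            D1 (\<lambda>x. c * complex_of_real (Ai ((Cbar * C1 / m) * x - x0))) g
          \<and> moment (\<lambda>x. c * complex_of_real (Ai ((Cbar * C1 / m) * x - x0))) = m
          \<and> defect g = eta2 / m\<^sup>2"
proof -
  define l where "l = Cbar * C1 / m"
  define k where "k = sqrt (l * Cbar)"
  have l: "l > 0" unfolding l_def using Cbar_pos C1_pos m by simp
  have k2: "k\<^sup>2 = l * Cbar" unfolding k_def using l Cbar_pos by simp
  note I = scaled_Ai_integrals[OF l, of k]
  have "D1 (\<lambda>x. complex_of_real k * complex_of_real (Ai (l * x - x0)))
      (\<lambda>x. complex_of_real (k * l * Ai' (l * x - x0)))"
    unfolding D1_def using H1_0_scaled_Ai[OF l] I(1,2) k2 l Cbar_pos by simp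
  moreover have "k\<^sup>2 * C1 / l\<^sup>2 = m"
    using k2 l m C1_pos Cbar_pos by (simp add: l_def field_simps power2_eq_square)
  moreover have "k\<^sup>2 * l * C2 = eta2 / m\<^sup>2"
    using k2 m by (simp add: l_def eta2_def power2_eq_square power3_eq_cube)
  ultimately show ?thesis
    using I(3,4) unfolding l_def by auto
qed

section \<open>Indefinite integrals and the product rule\<close>

lemma continuous_on_indefinite_set_integral:
  fixes p :: "real \<Rightarrow> real"
  assumes p: "set_integrable lborel {a..b} p"
  shows "continuous_on {a..b} (\<lambda>t. LINT s:{a..t}|lborel. p s)"
proof (rule continuous_on_eq[OF indefinite_integral_continuous_1])
  show "p integrable_on {a..b}" using set_borel_integral_eq_integral(1)[OF p] .
  fix t assume "t \<in> {a..b}"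
  then have "set_integrable lborel {a..t} p" by (intro set_integrable_subset[OF p]) auto
  then show "integral {a..t} p = (LINT s:{a..t}|lborel. p s)"
    by (simp add: set_borel_integral_eq_integral(2))
qed

lemma set_integrable_mult_continuous:
  fixes q P :: "real \<Rightarrow> real"
  assumes q: "set_integrable lborel {a..b} q" and P: "continuous_on {a..b} P"
  shows "set_integrable lborel {a..b} (\<lambda>t. q t * P t)"
proof -
  obtain C where C: "\<And>t. t \<in> {a..b} \<Longrightarrow> \<bar>P t\<bar> \<le> C"
    using compact_imp_bounded[OF compact_continuous_image[OF P compact_Icc]]
    by (force simp: bounded_iff)
  show ?thesis
  proof (rule set_integrable_bound[where f="\<lambda>t. q t * C"])
    show "set_integrable lborel {a..b} (\<lambda>t. q t * C)" using q by simp
    have "(\<lambda>x. indicat_real {a..b} x * q x) \<in> borel_measurable lborel"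
      using borel_measurable_integrable[OF q[unfolded set_integrable_def]] by simp
    moreover have "(\<lambda>x. indicat_real {a..b} x * P x) \<in> borel_measurable lborel"
      using borel_measurable_continuous_on_indicator[OF _ P] by simp
    ultimately have "(\<lambda>x. (indicat_real {a..b} x * q x) * (indicat_real {a..b} x * P x)) \<in> borel_measurable lborel"
      by measurable
    moreover have "(\<lambda>x. indicat_real {a..b} x *\<^sub>R (q x * P x))
        = (\<lambda>x. (indicat_real {a..b} x * q x) * (indicat_real {a..b} x * P x))"
      by (auto simp: indicator_def fun_eq_iff)
    ultimately show "set_borel_measurable lborel {a..b} (\<lambda>t. q t * P t)"
      unfolding set_borel_measurable_def by simp
    show "AE x in lborel. x \<in> {a..b} \<longrightarrow> norm (q x * P x) \<le> norm (q x * C)"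
    proof (intro AE_I2 impI)
      fix x assume x: "x \<in> {a..b}"
      have "\<bar>q x\<bar> * \<bar>P x\<bar> \<le> \<bar>q x\<bar> * C" using C[OF x] by (intro mult_left_mono) auto
      moreover have "C \<ge> 0" using C[OF x] by linarith
      ultimately show "norm (q x * P x) \<le> norm (q x * C)" by (simp add: abs_mult)
    qed
  qed
qed

lemma set_integral_Icc_split:
  fixes p :: "real \<Rightarrow> real"
  assumes p: "set_integrable lborel {a..b} p" and t: "a \<le> t" "t \<le> b"
  shows "(LINT s:{a..t}|lborel. p s) + (LINT s:{t..b}|lborel. p s) = (LINT s:{a..b}|lborel. p s)"
proof -
  have "set_integrable lborel {a<..<b} p" by (rule set_integrable_subset[OF p]) auto
  then have "interval_lebesgue_integrable lborel (min (ereal a) (min (ereal t) (ereal b)))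
      (max (ereal a) (max (ereal t) (ereal b))) p"
    using t unfolding interval_lebesgue_integrable_def by (auto simp: min_def max_def)
  from interval_integral_sum[OF this] show ?thesis
    using t by (simp add: interval_integral_Icc)
qed

lemma integrable_lborel_pair_mult:
  fixes P Q :: "real \<Rightarrow> real"
  assumes P: "integrable lborel P" and Q: "integrable lborel Q"
  shows "integrable (lborel \<Otimes>\<^sub>M lborel) (\<lambda>(t, s). P t * Q s)"
proof (rule lborel_pair.Fubini_integrable)
  have [measurable]: "P \<in> borel_measurable borel" "Q \<in> borel_measurable borel"
    using P Q by auto
  show "(\<lambda>(t, s). P t * Q s) \<in> borel_measurable (lborel \<Otimes>\<^sub>M lborel)"
    by measurable
  show "AE t in lborel. integrable lborel (\<lambda>s. case (t, s) of (t, s) \<Rightarrow> P t * Q s)"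
    using Q by (intro AE_I2) simp
  have "integrable lborel (\<lambda>t. \<bar>P t\<bar> * (LINT s|lborel. \<bar>Q s\<bar>))"
    using P by (intro integrable_mult_left integrable_abs)
  then show "integrable lborel (\<lambda>t. LINT s|lborel. norm (case (t, s) of (t, s) \<Rightarrow> P t * Q s))"
    by (simp add: abs_mult)
qed

lemma integrable_lower_triangle_product:
  fixes P Q :: "real \<Rightarrow> real"
  assumes P: "integrable lborel P" and Q: "integrable lborel Q"
  shows "integrable (lborel \<Otimes>\<^sub>M lborel) (\<lambda>(t, s). if s \<le> t then P t * Q s else 0)"
proof (rule Bochner_Integration.integrable_bound[OF integrable_lborel_pair_mult[OF P Q]])
  have [measurable]: "P \<in> borel_measurable borel" "Q \<in> borel_measurable borel"
    using P Q by auto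
  show "(\<lambda>(t, s). if s \<le> t then P t * Q s else 0) \<in> borel_measurable (lborel \<Otimes>\<^sub>M lborel)"
    by measurable
  show "AE x in lborel \<Otimes>\<^sub>M lborel. norm ((\<lambda>(t, s). if s \<le> t then P t * Q s else 0) x)
      \<le> norm ((\<lambda>(t, s). P t * Q s) x)"
    by (intro AE_I2) (auto split: prod.split)
qed

lemma set_integral_triangle_swap:
  fixes p q :: "real \<Rightarrow> real"
  assumes p: "set_integrable lborel {a..b} p" and q: "set_integrable lborel {a..b} q"
  shows "(LINT t:{a..b}|lborel. p t * (LINT s:{a..t}|lborel. q s))
       = (LINT s:{a..b}|lborel. q s * (LINT t:{s..b}|lborel. p t))"
proof -
  define P where "P t = indicator {a..b} t * p t" for t
  define Q where "Q s = indicator {a..b} s * q s" for s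
  define f where "f t s = (if s \<le> t then P t * Q s else 0)" for t s :: real
  have "integrable (lborel \<Otimes>\<^sub>M lborel) (\<lambda>(t, s). f t s)"
    unfolding f_def using p q
    by (intro integrable_lower_triangle_product) (simp_all add: P_def Q_def set_integrable_def)
  then have swap: "(LINT s|lborel. LINT t|lborel. f t s) = (LINT t|lborel. LINT s|lborel. f t s)"
    using lborel_pair.Fubini_integral[of f] by simp
  have "(LINT t:{a..b}|lborel. p t * (LINT s:{a..t}|lborel. q s)) = (LINT t|lborel. LINT s|lborel. f t s)"
    unfolding set_lebesgue_integral_def
  proof (rule Bochner_Integration.integral_cong[OF refl])
    fix t :: real
    have "(LINT s|lborel. f t s) = (LINT s|lborel. indicator {a..b} t * p t * (indicat_real {a..t} s * q s))"
      by (rule Bochner_Integration.integral_cong) (auto simp: f_def P_def Q_def indicator_def)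
    then show "indicat_real {a..b} t *\<^sub>R (p t * (LBINT s. indicat_real {a..t} s *\<^sub>R q s)) = (LINT s|lborel. f t s)"
      by simp
  qed
  also have "\<dots> = (LINT s|lborel. LINT t|lborel. f t s)"
    by (rule swap[symmetric])
  also have "\<dots> = (LINT s:{a..b}|lborel. q s * (LINT t:{s..b}|lborel. p t))"
    unfolding set_lebesgue_integral_def
  proof (rule Bochner_Integration.integral_cong[OF refl])
    fix s :: real
    have "(LINT t|lborel. f t s) = (LINT t|lborel. indicator {a..b} s * q s * (indicat_real {s..b} t * p t))"
      by (rule Bochner_Integration.integral_cong) (auto simp: f_def P_def Q_def indicator_def)
    then show "(LINT t|lborel. f t s) = indicat_real {a..b} s *\<^sub>R (q s * (LBINT t. indicat_real {s..b} t *\<^sub>R p t))"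
      by simp
  qed
  finally show ?thesis .
qed

lemma set_integral_product_rule_0:
  fixes p q :: "real \<Rightarrow> real"
  assumes p: "set_integrable lborel {a..b} p" and q: "set_integrable lborel {a..b} q"
  defines "P \<equiv> \<lambda>t. LINT s:{a..t}|lborel. p s"
    and "Q \<equiv> \<lambda>t. LINT s:{a..t}|lborel. q s"
  shows "set_integrable lborel {a..b} (\<lambda>t. P t * q t + p t * Q t)"
    and "P b * Q b = (LINT t:{a..b}|lborel. P t * q t + p t * Q t)"
proof -
  have P_cont: "continuous_on {a..b} P" and Q_cont: "continuous_on {a..b} Q"
    unfolding P_def Q_def using p q by (simp_all add: continuous_on_indefinite_set_integral)
  have Pq: "set_integrable lborel {a..b} (\<lambda>t. P t * q t)"
    using set_integrable_mult_continuous[OF q P_cont] by (simp add: mult.commute)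
  have pQ: "set_integrable lborel {a..b} (\<lambda>t. p t * Q t)"
    by (rule set_integrable_mult_continuous[OF p Q_cont])
  show "set_integrable lborel {a..b} (\<lambda>t. P t * q t + p t * Q t)"
    by (rule set_integral_add(1)[OF Pq pQ])
  have "(LINT t:{a..b}|lborel. p t * Q t) = (LINT t:{a..b}|lborel. q t * (LINT s:{t..b}|lborel. p s))"
    unfolding Q_def by (rule set_integral_triangle_swap[OF p q])
  also have "\<dots> = (LINT t:{a..b}|lborel. q t * P b - P t * q t)"
  proof (rule set_lebesgue_integral_cong)
    show "\<forall>t. t \<in> {a..b} \<longrightarrow> q t * (LINT s:{t..b}|lborel. p s) = q t * P b - P t * q t"
    proof (intro allI impI)
      fix t assume "t \<in> {a..b}"
      then have "P t + (LINT s:{t..b}|lborel. p s) = P b"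
        unfolding P_def by (intro set_integral_Icc_split[OF p]) auto
      then have tail: "(LINT s:{t..b}|lborel. p s) = P b - P t" by linarith
      show "q t * (LINT s:{t..b}|lborel. p s) = q t * P b - P t * q t"
        unfolding tail by (simp add: algebra_simps)
    qed
  qed simp
  also have "\<dots> = Q b * P b - (LINT t:{a..b}|lborel. P t * q t)"
    using q Pq by (simp add: set_integral_diff Q_def)
  finally show "P b * Q b = (LINT t:{a..b}|lborel. P t * q t + p t * Q t)"
    using Pq pQ by (simp add: set_integral_add)
qed

lemma set_integral_product_rule:
  fixes p q P Q :: "real \<Rightarrow> real"
  assumes p: "set_integrable lborel {a..b} p" and q: "set_integrable lborel {a..b} q"
    and P: "\<And>t. a \<le> t \<Longrightarrow> t \<le> b \<Longrightarrow> P t = P a + (LINT s:{a..t}|lborel. p s)"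
    and Q: "\<And>t. a \<le> t \<Longrightarrow> t \<le> b \<Longrightarrow> Q t = Q a + (LINT s:{a..t}|lborel. q s)"
    and ab: "a \<le> b"
  shows "set_integrable lborel {a..b} (\<lambda>t. P t * q t + p t * Q t)"
    and "P b * Q b - P a * Q a = (LINT t:{a..b}|lborel. P t * q t + p t * Q t)"
proof -
  define P0 where "P0 t = (LINT s:{a..t}|lborel. p s)" for t
  define Q0 where "Q0 t = (LINT s:{a..t}|lborel. q s)" for t
  note R = set_integral_product_rule_0[OF p q, folded P0_def Q0_def]
  have split: "P t * q t + p t * Q t = (P a * q t + Q a * p t) + (P0 t * q t + p t * Q0 t)"
    if "t \<in> {a..b}" for t
    using P[of t] Q[of t] that unfolding P0_def Q0_def by (simp add: algebra_simps)
  have const: "set_integrable lborel {a..b} (\<lambda>t. P a * q t + Q a * p t)"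
    using p q by (intro set_integral_add) auto
  show "set_integrable lborel {a..b} (\<lambda>t. P t * q t + p t * Q t)"
    using set_integral_add(1)[OF const R(1)] by (simp only: set_integrable_cong[OF refl refl split])
  have "(LINT t:{a..b}|lborel. P t * q t + p t * Q t)
      = (LINT t:{a..b}|lborel. (P a * q t + Q a * p t) + (P0 t * q t + p t * Q0 t))"
    by (rule set_lebesgue_integral_cong) (simp_all add: split)
  also have "\<dots> = P a * Q0 b + Q a * P0 b + P0 b * Q0 b"
    using const R p q by (simp add: set_integral_add P0_def Q0_def)
  finally show "P b * Q b - P a * Q a = (LINT t:{a..b}|lborel. P t * q t + p t * Q t)"
    using P[of b] Q[of b] ab unfolding P0_def Q0_def by (simp add: algebra_simps)
qed

section \<open>The lower bound\<close>

lemma H1_0_component: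
  fixes T :: "complex \<Rightarrow> real"
  assumes H: "H1_0 \<psi> g" and T: "bounded_linear T" and T_le: "\<And>z. \<bar>T z\<bar> \<le> cmod z" and t: "0 \<le> t"
  shows "set_integrable lborel {0..t} (\<lambda>x. T (g x))"
    and "set_integrable lborel {0..t} (\<lambda>x. (T (g x))\<^sup>2)"
    and "T (\<psi> t) = (LINT s:{0..t}|lborel. T (g s))"
proof -
  interpret T: bounded_linear T by (rule T)
  have g: "integrable lborel (\<lambda>x. indicat_real {0..t} x *\<^sub>R g x)"
    and \<psi>: "\<psi> t = (LINT s:{0..t}|lborel. g s)"
    and [measurable]: "g \<in> borel_measurable lborel"
    using H t unfolding H1_0_def set_integrable_def by auto
  have g2: "set_integrable lborel {0..t} (\<lambda>x. (cmod (g x))\<^sup>2)"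
    using H unfolding H1_0_def by (auto intro: set_integrable_subset)
  show "set_integrable lborel {0..t} (\<lambda>x. T (g x))"
    using integrable_bounded_linear[OF T g] unfolding set_integrable_def by (simp add: T.scaleR)
  show "T (\<psi> t) = (LINT s:{0..t}|lborel. T (g s))"
    using integral_bounded_linear[OF T g] unfolding \<psi> set_lebesgue_integral_def by (simp add: T.scaleR)
  show "set_integrable lborel {0..t} (\<lambda>x. (T (g x))\<^sup>2)"
  proof (rule set_integrable_bound[OF g2])
    have [measurable]: "T \<in> borel_measurable borel"
      by (rule borel_measurable_continuous_onI[OF linear_continuous_on[OF T]])
    show "set_borel_measurable lborel {0..t} (\<lambda>x. (T (g x))\<^sup>2)"
      unfolding set_borel_measurable_def by measurable
    show "AE x in lborel. x \<in> {0..t} \<longrightarrow> norm ((T (g x))\<^sup>2) \<le> norm ((cmod (g x))\<^sup>2)"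
      using power_mono[OF T_le abs_ge_zero, of _ 2] by (intro AE_I2) simp
  qed
qed

lemma FTC_set_integral_Icc:
  fixes w w' :: "real \<Rightarrow> real"
  assumes deriv: "\<And>t. a \<le> t \<Longrightarrow> t \<le> b \<Longrightarrow> (w has_real_derivative w' t) (at t)"
    and cont: "continuous_on {a..b} w'" and t: "a \<le> t" "t \<le> b"
  shows "w t = w a + (LINT s:{a..t}|lborel. w' s)"
proof -
  have "(LBINT s=ereal a..ereal t. w' s) = w t - w a"
    using t deriv continuous_on_subset[OF cont, of "{a..t}"]
    by (intro interval_integral_FTC_finite)
       (auto simp: has_real_derivative_iff_has_vector_derivative[symmetric] has_field_derivative_at_within)
  then show ?thesis using t by (simp add: interval_integral_Icc)
qed

lemma square_indefinite_set_integral: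
  fixes u v :: "real \<Rightarrow> real"
  assumes v: "set_integrable lborel {a..b} v"
    and u: "\<And>t. a \<le> t \<Longrightarrow> t \<le> b \<Longrightarrow> u t = (LINT s:{a..t}|lborel. v s)"
  shows "\<And>t. a \<le> t \<Longrightarrow> t \<le> b \<Longrightarrow> set_integrable lborel {a..t} (\<lambda>s. 2 * u s * v s)"
    and "\<And>t. a \<le> t \<Longrightarrow> t \<le> b \<Longrightarrow> (u t)\<^sup>2 = (LINT s:{a..t}|lborel. 2 * u s * v s)"
proof -
  fix t assume t: "a \<le> t" "t \<le> b"
  have ua: "u a = 0" using u[of a] t interval_integral_Icc[of a a v] by simp
  have v_sub: "set_integrable lborel {a..t} v"
    by (rule set_integrable_subset[OF v]) (use t in auto)
  have u_ftc: "u s = u a + (LINT r:{a..s}|lborel. v r)" if "a \<le> s" "s \<le> t" for s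
    using u[of s] that t ua by simp
  note R = set_integral_product_rule[OF v_sub v_sub u_ftc u_ftc t(1)]
  show "set_integrable lborel {a..t} (\<lambda>s. 2 * u s * v s)"
    using R(1) by (simp add: algebra_simps)
  show "(u t)\<^sup>2 = (LINT s:{a..t}|lborel. 2 * u s * v s)"
    using R(2) ua by (simp add: power2_eq_square algebra_simps)
qed

(* If w' = V - w^2 then (w u^2)' = u'^2 + V u^2 - (u' - w u)^2. *)

lemma riccati_lower_bound:
  fixes u v w V :: "real \<Rightarrow> real"
  assumes b: "0 \<le> b"
    and w: "\<And>t. 0 \<le> t \<Longrightarrow> t \<le> b \<Longrightarrow> (w has_real_derivative V t - (w t)\<^sup>2) (at t)"
    and V: "continuous_on {0..b} V"
    and v: "set_integrable lborel {0..b} v" and v2: "set_integrable lborel {0..b} (\<lambda>x. (v x)\<^sup>2)"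
    and u: "\<And>t. 0 \<le> t \<Longrightarrow> t \<le> b \<Longrightarrow> u t = (LINT s:{0..t}|lborel. v s)"
  shows "set_integrable lborel {0..b} (\<lambda>x. (v x)\<^sup>2 + V x * (u x)\<^sup>2)"
    and "w b * (u b)\<^sup>2 \<le> (LINT x:{0..b}|lborel. (v x)\<^sup>2 + V x * (u x)\<^sup>2)"
proof -
  have u_cont: "continuous_on {0..b} u"
    using continuous_on_indefinite_set_integral[OF v] by (rule continuous_on_eq) (simp add: u)
  have w'_cont: "continuous_on {0..b} (\<lambda>t. V t - (w t)\<^sup>2)"
    using w DERIV_isCont by (intro continuous_intros V continuous_at_imp_continuous_on) fastforce
  have u0: "u 0 = 0" using u[of 0] b interval_integral_Icc[of 0 0 v] by simp
  have u2_ftc: "(u t)\<^sup>2 = (u 0)\<^sup>2 + (LINT s:{0..t}|lborel. 2 * u s * v s)" if "0 \<le> t" "t \<le> b" for t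
    using that u0 by (subst square_indefinite_set_integral(2)[OF v]) (simp_all add: u)
  have uv_int: "set_integrable lborel {0..b} (\<lambda>s. 2 * u s * v s)"
    using b by (intro square_indefinite_set_integral(1)[OF v]) (simp_all add: u)
  note wu = set_integral_product_rule[OF borel_integrable_atLeastAtMost'[OF w'_cont] uv_int
      FTC_set_integral_Icc[OF w w'_cont] u2_ftc b]
  have "set_integrable lborel {0..b} (\<lambda>x. V x * (u x)\<^sup>2)"
    by (intro borel_integrable_atLeastAtMost' continuous_intros V u_cont)
  then show int: "set_integrable lborel {0..b} (\<lambda>x. (v x)\<^sup>2 + V x * (u x)\<^sup>2)"
    by (rule set_integral_add(1)[OF v2])
  have "w b * (u b)\<^sup>2 = (LINT t:{0..b}|lborel. w t * (2 * u t * v t) + (V t - (w t)\<^sup>2) * (u t)\<^sup>2)"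
    using wu(2) u0 by simp
  also have "\<dots> \<le> (LINT x:{0..b}|lborel. (v x)\<^sup>2 + V x * (u x)\<^sup>2)"
  proof (rule set_integral_mono[OF wu(1) int])
    fix t
    show "w t * (2 * u t * v t) + (V t - (w t)\<^sup>2) * (u t)\<^sup>2 \<le> (v t)\<^sup>2 + V t * (u t)\<^sup>2"
      using zero_le_power2[of "v t - w t * u t"] by (simp add: power2_eq_square algebra_simps)
  qed
  finally show "w b * (u b)\<^sup>2 \<le> (LINT x:{0..b}|lborel. (v x)\<^sup>2 + V x * (u x)\<^sup>2)" .
qed

lemma riccati_lower_bound_H1_0:
  assumes H: "H1_0 \<psi> g" and b: "0 \<le> b"
    and w: "\<And>t. 0 \<le> t \<Longrightarrow> t \<le> b \<Longrightarrow> (w has_real_derivative V t - (w t)\<^sup>2) (at t)"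
    and V: "continuous_on {0..b} V"
  shows "set_integrable lborel {0..b} (\<lambda>x. (cmod (g x))\<^sup>2 + V x * (cmod (\<psi> x))\<^sup>2)"
    and "w b * (cmod (\<psi> b))\<^sup>2 \<le> (LINT x:{0..b}|lborel. (cmod (g x))\<^sup>2 + V x * (cmod (\<psi> x))\<^sup>2)"
proof -
  note Re_\<psi> = H1_0_component(3)[OF H bounded_linear_Re abs_Re_le_cmod]
  note Im_\<psi> = H1_0_component(3)[OF H bounded_linear_Im abs_Im_le_cmod]
  have Re: "set_integrable lborel {0..b} (\<lambda>x. (Re (g x))\<^sup>2 + V x * (Re (\<psi> x))\<^sup>2)"
    "w b * (Re (\<psi> b))\<^sup>2 \<le> (LINT x:{0..b}|lborel. (Re (g x))\<^sup>2 + V x * (Re (\<psi> x))\<^sup>2)"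
    using riccati_lower_bound[OF b w V H1_0_component(1,2)[OF H bounded_linear_Re abs_Re_le_cmod b],
      of "\<lambda>t. Re (\<psi> t)"] Re_\<psi> by auto
  have Im: "set_integrable lborel {0..b} (\<lambda>x. (Im (g x))\<^sup>2 + V x * (Im (\<psi> x))\<^sup>2)"
    "w b * (Im (\<psi> b))\<^sup>2 \<le> (LINT x:{0..b}|lborel. (Im (g x))\<^sup>2 + V x * (Im (\<psi> x))\<^sup>2)"
    using riccati_lower_bound[OF b w V H1_0_component(1,2)[OF H bounded_linear_Im abs_Im_le_cmod b],
      of "\<lambda>t. Im (\<psi> t)"] Im_\<psi> by auto
  have split: "(cmod (g x))\<^sup>2 + V x * (cmod (\<psi> x))\<^sup>2
      = ((Re (g x))\<^sup>2 + V x * (Re (\<psi> x))\<^sup>2) + ((Im (g x))\<^sup>2 + V x * (Im (\<psi> x))\<^sup>2)" for x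
    by (simp add: cmod_power2 algebra_simps)
  show "set_integrable lborel {0..b} (\<lambda>x. (cmod (g x))\<^sup>2 + V x * (cmod (\<psi> x))\<^sup>2)"
    unfolding split by (rule set_integral_add(1)[OF Re(1) Im(1)])
  have "w b * (cmod (\<psi> b))\<^sup>2 = w b * (Re (\<psi> b))\<^sup>2 + w b * (Im (\<psi> b))\<^sup>2"
    by (simp add: cmod_power2 algebra_simps)
  also have "\<dots> \<le> (LINT x:{0..b}|lborel. (Re (g x))\<^sup>2 + V x * (Re (\<psi> x))\<^sup>2)
      + (LINT x:{0..b}|lborel. (Im (g x))\<^sup>2 + V x * (Im (\<psi> x))\<^sup>2)"
    using Re(2) Im(2) by (rule add_mono)
  also have "\<dots> = (LINT x:{0..b}|lborel. (cmod (g x))\<^sup>2 + V x * (cmod (\<psi> x))\<^sup>2)"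
    unfolding split by (rule set_integral_add(2)[OF Re(1) Im(1), symmetric])
  finally show "w b * (cmod (\<psi> b))\<^sup>2 \<le> (LINT x:{0..b}|lborel. (cmod (g x))\<^sup>2 + V x * (cmod (\<psi> x))\<^sup>2)" .
qed

lemma set_integrable_not_eventually_ge:
  fixes h :: "real \<Rightarrow> real"
  assumes h: "set_integrable lborel {0..} h" and d: "d > 0" and c: "c \<ge> 0"
    and ge: "\<And>x. x \<ge> c \<Longrightarrow> h x \<ge> d"
  shows False
proof -
  define I where "I = (LINT x:{0..}|lborel. \<bar>h x\<bar>)"
  define n where "n = I / d + 1"
  have "I \<ge> 0" unfolding I_def set_lebesgue_integral_def by (rule integral_nonneg_AE) auto
  then have n: "n > 0" unfolding n_def using d by (simp add: add_nonneg_pos)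
  have h_sub: "set_integrable lborel {c..c + n} h"
    by (rule set_integrable_subset[OF h]) (use c in auto)
  have "d * n = (LINT x:{c..c + n}|lborel. d)"
    using n by (simp add: set_integral_const)
  also have "\<dots> \<le> (LINT x:{c..c + n}|lborel. h x)"
    using h_sub ge by (intro set_integral_mono) (auto intro: borel_integrable_atLeastAtMost')
  also have "\<dots> \<le> I"
    unfolding I_def set_lebesgue_integral_def
  proof (rule Bochner_Integration.integral_mono)
    show "integrable lborel (\<lambda>x. indicat_real {c..c + n} x *\<^sub>R h x)"
      using h_sub unfolding set_integrable_def .
    show "integrable lborel (\<lambda>x. indicat_real {0..} x *\<^sub>R \<bar>h x\<bar>)"
      using set_integrable_abs[OF h] unfolding set_integrable_def by simp
    show "indicat_real {c..c + n} x *\<^sub>R h x \<le> indicat_real {0..} x *\<^sub>R \<bar>h x\<bar>" for x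
      using c by (auto simp: indicator_def)
  qed
  finally have "d * n \<le> I" .
  moreover have "d * n = I + d" unfolding n_def using d by (simp add: field_simps)
  ultimately show False using d by simp
qed

lemma set_integral_nonneg_if_partial_ge:
  fixes F h :: "real \<Rightarrow> real"
  assumes F: "set_integrable lborel {0..} F" and h: "set_integrable lborel {0..} h" and c: "c \<ge> 0"
    and partial: "\<And>b. b \<ge> c \<Longrightarrow> - h b \<le> (LINT x:{0..b}|lborel. F x)"
  shows "(LINT x:{0..}|lborel. F x) \<ge> 0"
proof (rule ccontr)
  define L where "L = (LINT x:{0..}|lborel. F x)"
  assume "\<not> (LINT x:{0..}|lborel. F x) \<ge> 0"
  then have L: "L < 0" unfolding L_def by simp
  have "((\<lambda>b. LINT x:{0..b}|lborel. F x) \<longlongrightarrow> L) at_top"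
    unfolding L_def by (rule tendsto_set_lebesgue_integral_at_top[OF _ F]) auto
  then have "\<forall>\<^sub>F b in at_top. (LINT x:{0..b}|lborel. F x) < L / 2"
    by (rule order_tendstoD(2)) (use L in simp)
  then obtain B where B: "\<And>b. b \<ge> B \<Longrightarrow> (LINT x:{0..b}|lborel. F x) < L / 2"
    unfolding eventually_at_top_linorder by blast
  have h_ge: "h b \<ge> - L / 2" if "b \<ge> max B c" for b
    using B[of b] partial[of b] that by simp
  have "max B c \<ge> 0" using c by (simp add: le_max_iff_disj)
  from set_integrable_not_eventually_ge[OF h _ this h_ge] L show False by simp
qed

(* w = \<phi>'/\<phi> for \<phi>(x) = Ai(l x - x0 + e), which solves \<phi>'' = V \<phi> and, thanks to e > 0,
   is positive on [0, \<infinity>). *)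

lemma Ai_log_deriv_riccati:
  assumes l: "l > 0" and e: "e > 0" and x: "x \<ge> 0"
  shows "((\<lambda>x. l * Ai' (l * x - x0 + e) / Ai (l * x - x0 + e)) has_real_derivative
      (l ^ 3 * x - l\<^sup>2 * (x0 - e)) - (l * Ai' (l * x - x0 + e) / Ai (l * x - x0 + e))\<^sup>2) (at x)"
proof -
  have "Ai (l * x - x0 + e) \<noteq> 0"
    using l e x by (intro Ai_pos_gt_minus_x0[THEN less_imp_neq, symmetric]) (simp add: add_nonneg_pos)
  then show ?thesis
    by (auto intro!: derivative_eq_intros simp: field_simps power2_eq_square power3_eq_cube)
qed

lemma Ai_log_deriv_ge:
  assumes l: "l > 0" and y: "l * x - x0 + e \<ge> 0"
  shows "- (l * Ai' (l * x - x0 + e) / Ai (l * x - x0 + e)) \<le> l * (l * x - x0 + e + 2)"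
proof -
  have "- Ai' (l * x - x0 + e) / Ai (l * x - x0 + e) < l * x - x0 + e + 2"
    by (subst pos_divide_less_eq[OF Ai_pos[OF y]]) (use minus_Ai'_less[OF y] in \<open>simp add: mult.commute\<close>)
  then have "l * (- Ai' (l * x - x0 + e) / Ai (l * x - x0 + e)) \<le> l * (l * x - x0 + e + 2)"
    using l by (intro mult_left_mono) auto
  then show ?thesis by simp
qed

lemma D1_set_integral_affine_weight:
  assumes D: "D1 \<psi> g"
  shows "set_integrable lborel {0..} (\<lambda>x. (a * x + c) * (cmod (\<psi> x))\<^sup>2)"
    and "(LINT x:{0..}|lborel. (a * x + c) * (cmod (\<psi> x))\<^sup>2) = a * moment \<psi> + c"
proof -
  have N: "set_integrable lborel {0..} (\<lambda>x. (cmod (\<psi> x))\<^sup>2)" "(LINT x:{0..}|lborel. (cmod (\<psi> x))\<^sup>2) = 1"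
    and M: "set_integrable lborel {0..} (\<lambda>x. x * (cmod (\<psi> x))\<^sup>2)"
    using D unfolding D1_def H1_0_def by auto
  have eq: "(a * x + c) * (cmod (\<psi> x))\<^sup>2 = a * (x * (cmod (\<psi> x))\<^sup>2) + c * (cmod (\<psi> x))\<^sup>2" for x
    by (simp add: algebra_simps)
  show "set_integrable lborel {0..} (\<lambda>x. (a * x + c) * (cmod (\<psi> x))\<^sup>2)"
    unfolding eq using M N(1) by (intro set_integral_add set_integrable_mult_right)
  show "(LINT x:{0..}|lborel. (a * x + c) * (cmod (\<psi> x))\<^sup>2) = a * moment \<psi> + c"
    unfolding eq using M N by (simp add: set_integral_add set_integrable_mult_right moment_def)
qed

lemma defect_lower_bound_approx:
  assumes D: "D1 \<psi> g" and l: "l > 0" and e: "e > 0"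
  shows "l\<^sup>2 * (x0 - e) - l ^ 3 * moment \<psi> \<le> defect g"
proof -
  have H: "H1_0 \<psi> g" and G: "set_integrable lborel {0..} (\<lambda>x. (cmod (g x))\<^sup>2)"
    using D unfolding D1_def H1_0_def by auto
  define V where "V x = l ^ 3 * x + - (l\<^sup>2 * (x0 - e))" for x
  define w where "w x = l * Ai' (l * x - x0 + e) / Ai (l * x - x0 + e)" for x
  define F where "F x = (cmod (g x))\<^sup>2 + V x * (cmod (\<psi> x))\<^sup>2" for x
  note VW = D1_set_integral_affine_weight[OF D, of "l ^ 3" "- (l\<^sup>2 * (x0 - e))", folded V_def]
  have "(LINT x:{0..}|lborel. F x) \<ge> 0"
  proof (rule set_integral_nonneg_if_partial_ge)
    show "set_integrable lborel {0..} F"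
      unfolding F_def by (rule set_integral_add(1)[OF G VW(1)])
    show "set_integrable lborel {0..} (\<lambda>x. (l\<^sup>2 * x + l * (- x0 + e + 2)) * (cmod (\<psi> x))\<^sup>2)"
      by (rule D1_set_integral_affine_weight(1)[OF D])
    fix b assume "b \<ge> max 0 ((x0 - e) / l)"
    then have b: "b \<ge> 0" "l * b - x0 + e \<ge> 0"
      using l by (auto simp: field_simps)
    have "- ((l\<^sup>2 * b + l * (- x0 + e + 2)) * (cmod (\<psi> b))\<^sup>2) \<le> w b * (cmod (\<psi> b))\<^sup>2"
      using mult_right_mono[OF Ai_log_deriv_ge[OF l b(2)], of "(cmod (\<psi> b))\<^sup>2"]
      by (simp add: w_def power2_eq_square algebra_simps)
    also have "\<dots> \<le> (LINT x:{0..b}|lborel. F x)"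
      unfolding F_def using Ai_log_deriv_riccati[OF l e] b(1) unfolding w_def V_def
      by (intro riccati_lower_bound_H1_0(2)[OF H]) (auto intro!: continuous_intros)
    finally show "- ((l\<^sup>2 * b + l * (- x0 + e + 2)) * (cmod (\<psi> b))\<^sup>2) \<le> (LINT x:{0..b}|lborel. F x)" .
  qed simp
  moreover have "(LINT x:{0..}|lborel. F x) = defect g + (l ^ 3 * moment \<psi> - l\<^sup>2 * (x0 - e))"
    unfolding F_def defect_def set_integral_add(2)[OF G VW(1)] VW(2) by (simp add: V_def)
  ultimately show ?thesis by (simp add: algebra_simps)
qed

lemma defect_lower_bound:
  assumes D: "D1 \<psi> g" and l: "l > 0"
  shows "l\<^sup>2 * x0 - l ^ 3 * moment \<psi> \<le> defect g"
proof (rule field_le_epsilon)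
  fix \<epsilon> :: real assume "\<epsilon> > 0"
  then have "l\<^sup>2 * (x0 - \<epsilon> / l\<^sup>2) - l ^ 3 * moment \<psi> \<le> defect g"
    using l by (intro defect_lower_bound_approx[OF D l]) simp
  then show "l\<^sup>2 * x0 - l ^ 3 * moment \<psi> \<le> defect g + \<epsilon>"
    using l by (simp add: algebra_simps)
qed

lemma moment_pos:
  assumes D: "D1 \<psi> g"
  shows "moment \<psi> > 0"
proof (rule ccontr)
  assume "\<not> moment \<psi> > 0"
  define l where "l = (\<bar>defect g\<bar> + 1) / x0 + 1"
  have l: "l \<ge> 1" unfolding l_def using x0_pos by simp
  have "l * x0 \<le> l\<^sup>2 * x0"
    using l x0_pos by (simp add: power2_eq_square)
  also have "\<dots> \<le> l\<^sup>2 * x0 - l ^ 3 * moment \<psi>"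
    using l \<open>\<not> moment \<psi> > 0\<close> by (simp add: mult_nonneg_nonpos)
  also have "\<dots> \<le> defect g"
    using l by (intro defect_lower_bound[OF D]) simp
  finally have "l * x0 \<le> defect g" .
  moreover have "l * x0 = \<bar>defect g\<bar> + 1 + x0"
    unfolding l_def using x0_pos by (simp add: field_simps)
  ultimately show False
    using x0_pos abs_ge_self[of "defect g"] by linarith
qed

(* The Airy profile with the same l attains the bound, so this l is optimal. *)

lemma defect_ge_eta2:
  assumes m: "m > 0" and D: "D1 \<psi> g" and M: "moment \<psi> = m"
  shows "eta2 / m\<^sup>2 \<le> defect g"
proof -
  define l where "l = Cbar * C1 / m"
  have l: "l > 0" unfolding l_def using Cbar_pos C1_pos m by simp
  have x0_eq: "x0 = Cbar * (C1 + C2)"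
    using energy_identity Cbar_pos by (simp add: field_simps)
  have "l\<^sup>2 * x0 - l ^ 3 * moment \<psi> = eta2 / m\<^sup>2"
    using m unfolding M l_def eta2_def x0_eq by (simp add: field_simps power2_eq_square power3_eq_cube)
  then show ?thesis
    using defect_lower_bound[OF D l] by simp
qed

theorem mainTheorem7:
  fixes m :: real
  assumes "m > 0"
  shows "(\<forall>\<psi> g. D1 \<psi> g \<and> moment \<psi> = m \<longrightarrow> eta2 / m\<^sup>2 \<le> defect g)
       \<and> (\<exists>c :: complex. \<exists>g.
            D1 (\<lambda>x. c * complex_of_real (Ai ((Cbar * C1 / m) * x - x0))) g
          \<and> moment (\<lambda>x. c * complex_of_real (Ai ((Cbar * C1 / m) * x - x0))) = m
          \<and> defect g = eta2 / m\<^sup>2)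
       \<and> (\<forall>\<psi> g. D1 \<psi> g \<longrightarrow> eta2 \<le> defect g * (moment \<psi>)\<^sup>2)"
proof (intro conjI allI impI)
  show "eta2 / m\<^sup>2 \<le> defect g" if "D1 \<psi> g \<and> moment \<psi> = m" for \<psi> g
    using defect_ge_eta2[OF assms] that by blast
  show "\<exists>c :: complex. \<exists>g.
            D1 (\<lambda>x. c * complex_of_real (Ai ((Cbar * C1 / m) * x - x0))) g
          \<and> moment (\<lambda>x. c * complex_of_real (Ai ((Cbar * C1 / m) * x - x0))) = m
          \<and> defect g = eta2 / m\<^sup>2"
    by (rule Ai_profile_attains_bound[OF assms])
  show "eta2 \<le> defect g * (moment \<psi>)\<^sup>2" if D: "D1 \<psi> g" for \<psi> g
  proof -
    have "moment \<psi> > 0" by (rule moment_pos[OF D])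
    moreover have "eta2 / (moment \<psi>)\<^sup>2 \<le> defect g"
      using defect_ge_eta2[OF calculation D refl] .
    ultimately show ?thesis by (simp add: field_simps)
  qed
qed

end
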